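(* Let $\zeta$ be the $\mathbb P_0$-almost sure limit of $-\frac1t\log L_t(\mathcal X^t)$ (the Neyman–Pearson error exponent for the probability of miss). Then $\underline\zeta\le\zeta$, where $\underline\zeta$ is the optimal value (infimum) of $$\begin{array}{ll}\text{minimize over }(\theta,\xi) & D(\theta\|P)+\sum_{i:\overline\theta_i>0}\overline\theta_i\frac{(\beta_i-\xi_i/\overline\theta_i)^2}{2}\\ \text{subject to}& H(\theta)\ge J_\theta(\xi),\quad\theta\in\Delta,\quad\xi\in\mathbb R^N.\end{array}$$
   Context: $V=\{1,\dots,N\}$; $P$ row-stochastic, irreducible, aperiodic, with stationary distribution $\pi>0$; $E=\{(i,j):P_{ij}>0\}$; $\beta_1,\dots,\beta_N\in\mathbb R$. $P(s^t)=\pi_{s_1}\prod_{k=1}^{t-1}P_{s_ks_{k+1}}$, $\mathcal S^t=\{s^t\in V^t:P(s^t)>0\}$. Under $\mathcal H_0$ (law $\mathbb P_0$) the $X_{i,k}$ ($i\in V,k\ge1$) are i.i.d. $\mathcal N(0,1)$; under $\mathcal H_1$ a Markov chain $(S_k)$ with initial law $\pi$ and transition matrix $P$ is present and conditionally on it $X_{i,k}\sim\mathcal N(\beta_i,1)$ if $S_k=i$, $\mathcal N(0,1)$ otherwise, independently. $L_t(\mathcal X^t)=\sum_{s^t\in\mathcal S^t}P(s^t)\exp\big(\sum_{k=1}^t(\beta_{s_k}X_{s_k,k}-\beta_{s_k}^2/2)\big)$. $\Delta=\{\theta\in\mathbb R^{N\times N}:\theta_{ij}\ge0,\sum_{i,j}\theta_{ij}=1,\sum_j\theta_{ij}=\sum_j\theta_{ji}\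 \forall i,\ \theta_{ij}=0\text{ if }(i,j)\notin E\}$, $\overline\theta=\theta\mathbf1$. $H(\theta)=-\sum_{i,j}\theta_{ij}\log\frac{\theta_{ij}}{\overline\theta_i}$, $D(\theta\|P)=\sum_{i,j}\theta_{ij}\log\frac{\theta_{ij}}{\overline\theta_iP_{ij}}$ (terms with $\theta_{ij}=0$ are $0$). $J_\theta(\xi)=\sum_{i:\overline\theta_i>0}\frac{1}{\overline\theta_i}\frac{\xi_i^2}{2}$ if $\xi_i=0$ whenever $\overline\theta_i=0$, and $+\infty$ otherwise. *)

theory Defs
  imports "HOL-Probability.Probability"
begin

text \<open>States are V = {1..N}. Matrices are functions nat => nat => real, vectors nat => real.\<close>

fun mpow :: "nat \<Rightarrow> (nat \<Rightarrow> nat \<Rightarrow> real) \<Rightarrow> nat \<Rightarrow> nat \<Rightarrow> nat \<Rightarrow> real" where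
  "mpow N P 0 i j = (if i = j then 1 else 0)"
| "mpow N P (Suc n) i j = (\<Sum>k\<in>{1..N}. mpow N P n i k * P k j)"

definition row_stochastic :: "nat \<Rightarrow> (nat \<Rightarrow> nat \<Rightarrow> real) \<Rightarrow> bool" where
  "row_stochastic N P \<longleftrightarrow>
     (\<forall>i\<in>{1..N}. \<forall>j\<in>{1..N}. P i j \<ge> 0) \<and> (\<forall>i\<in>{1..N}. (\<Sum>j\<in>{1..N}. P i j) = 1)"

definition irreducible_chain :: "nat \<Rightarrow> (nat \<Rightarrow> nat \<Rightarrow> real) \<Rightarrow> bool" where
  "irreducible_chain N P \<longleftrightarrow> (\<forall>i\<in>{1..N}. \<forall>j\<in>{1..N}. \<exists>n\<ge>1. mpow N P n i j > 0)"

definition aperiodic_chain :: "nat \<Rightarrow> (nat \<Rightarrow> nat \<Rightarrow> real) \<Rightarrow> bool" where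
  "aperiodic_chain N P \<longleftrightarrow> (\<forall>i\<in>{1..N}. Gcd {n::nat. n \<ge> 1 \<and> mpow N P n i i > 0} = 1)"

definition stationary_pos :: "nat \<Rightarrow> (nat \<Rightarrow> nat \<Rightarrow> real) \<Rightarrow> (nat \<Rightarrow> real) \<Rightarrow> bool" where
  "stationary_pos N P \<pi> \<longleftrightarrow> (\<forall>i\<in>{1..N}. \<pi> i > 0) \<and> (\<Sum>i\<in>{1..N}. \<pi> i) = 1 \<and>
     (\<forall>j\<in>{1..N}. (\<Sum>i\<in>{1..N}. \<pi> i * P i j) = \<pi> j)"

definition edges :: "nat \<Rightarrow> (nat \<Rightarrow> nat \<Rightarrow> real) \<Rightarrow> (nat \<times> nat) set" where
  "edges N P = {(i, j). i \<in> {1..N} \<and> j \<in> {1..N} \<and> P i j > 0}"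

definition path_prob :: "(nat \<Rightarrow> real) \<Rightarrow> (nat \<Rightarrow> nat \<Rightarrow> real) \<Rightarrow> nat list \<Rightarrow> real" where
  "path_prob \<pi> P s = \<pi> (s ! 0) * (\<Prod>k<length s - 1. P (s ! k) (s ! (k + 1)))"

definition paths :: "nat \<Rightarrow> (nat \<Rightarrow> real) \<Rightarrow> (nat \<Rightarrow> nat \<Rightarrow> real) \<Rightarrow> nat \<Rightarrow> nat list set" where
  "paths N \<pi> P t = {s. length s = t \<and> set s \<subseteq> {1..N} \<and> path_prob \<pi> P s > 0}"

text \<open>Likelihood ratio L_t; x i k is the observation X_{i,k} (k >= 1); s ! (k-1) = s_k.\<close>
definition lik :: "nat \<Rightarrow> (nat \<Rightarrow> real) \<Rightarrow> (nat \<Rightarrow> nat \<Rightarrow> real) \<Rightarrow> (nat \<Rightarrow> real) \<Rightarrow> nat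
    \<Rightarrow> (nat \<Rightarrow> nat \<Rightarrow> real) \<Rightarrow> real" where
  "lik N \<pi> P \<beta> t x = (\<Sum>s\<in>paths N \<pi> P t. path_prob \<pi> P s *
      exp (\<Sum>k<t. \<beta> (s ! k) * x (s ! k) (k + 1) - (\<beta> (s ! k))\<^sup>2 / 2))"

definition Delta :: "nat \<Rightarrow> (nat \<Rightarrow> nat \<Rightarrow> real) \<Rightarrow> (nat \<Rightarrow> nat \<Rightarrow> real) set" where
  "Delta N P = {\<theta>. (\<forall>i j. \<theta> i j \<ge> 0) \<and> (\<Sum>i\<in>{1..N}. \<Sum>j\<in>{1..N}. \<theta> i j) = 1 \<and>
      (\<forall>i\<in>{1..N}. (\<Sum>j\<in>{1..N}. \<theta> i j) = (\<Sum>j\<in>{1..N}. \<theta> j i)) \<and>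
      (\<forall>i j. (i, j) \<notin> edges N P \<longrightarrow> \<theta> i j = 0)}"

definition tbar :: "nat \<Rightarrow> (nat \<Rightarrow> nat \<Rightarrow> real) \<Rightarrow> nat \<Rightarrow> real" where
  "tbar N \<theta> i = (\<Sum>j\<in>{1..N}. \<theta> i j)"

definition entr :: "nat \<Rightarrow> (nat \<Rightarrow> nat \<Rightarrow> real) \<Rightarrow> real" where
  "entr N \<theta> = - (\<Sum>i\<in>{1..N}. \<Sum>j\<in>{1..N}.
      (if \<theta> i j = 0 then 0 else \<theta> i j * ln (\<theta> i j / tbar N \<theta> i)))"

definition kl_div :: "nat \<Rightarrow> (nat \<Rightarrow> nat \<Rightarrow> real) \<Rightarrow> (nat \<Rightarrow> nat \<Rightarrow> real) \<Rightarrow> real" where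
  "kl_div N \<theta> P = (\<Sum>i\<in>{1..N}. \<Sum>j\<in>{1..N}.
      (if \<theta> i j = 0 then 0 else \<theta> i j * ln (\<theta> i j / (tbar N \<theta> i * P i j))))"

definition Jfun :: "nat \<Rightarrow> (nat \<Rightarrow> nat \<Rightarrow> real) \<Rightarrow> (nat \<Rightarrow> real) \<Rightarrow> ereal" where
  "Jfun N \<theta> \<xi> = (if \<forall>i\<in>{1..N}. tbar N \<theta> i = 0 \<longrightarrow> \<xi> i = 0
     then ereal (\<Sum>i\<in>{i\<in>{1..N}. tbar N \<theta> i > 0}. (1 / tbar N \<theta> i) * ((\<xi> i)\<^sup>2 / 2))
     else \<infinity>)"

definition objective :: "nat \<Rightarrow> (nat \<Rightarrow> nat \<Rightarrow> real) \<Rightarrow> (nat \<Rightarrow> real) \<Rightarrow> (nat \<Rightarrow> nat \<Rightarrow> real)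
    \<Rightarrow> (nat \<Rightarrow> real) \<Rightarrow> real" where
  "objective N P \<beta> \<theta> \<xi> = kl_div N \<theta> P +
     (\<Sum>i\<in>{i\<in>{1..N}. tbar N \<theta> i > 0}. tbar N \<theta> i * (\<beta> i - \<xi> i / tbar N \<theta> i)\<^sup>2 / 2)"

definition zeta_low :: "nat \<Rightarrow> (nat \<Rightarrow> nat \<Rightarrow> real) \<Rightarrow> (nat \<Rightarrow> real) \<Rightarrow> ereal" where
  "zeta_low N P \<beta> = (INF p \<in> {(\<theta>, \<xi>). \<theta> \<in> Delta N P \<and> Jfun N \<theta> \<xi> \<le> ereal (entr N \<theta>)}.
      ereal (objective N P \<beta> (fst p) (snd p)))"

end

theory Submission
  imports Defs
begin

text \<open>
  Write \<open>L\<^sub>t = \<Sum>\<^sub>s Y\<^sub>s\<close>, the sum over the positive-probability state paths \<open>s\<close> of length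
  \<open>t\<close>. Closing \<open>s\<close> into a cycle by a return walk of bounded length turns its edge frequencies
  into a circulation \<open>\<theta> \<in> \<Delta>\<close>, the type of \<open>s\<close>, and there are only polynomially many types.
  For a path of type \<open>\<theta>\<close> whose cycle has length \<open>T\<close>, \<open>P(s)\<close> is at most a constant times
  \<open>exp (-T (D(\<theta>\<parallel>P) + H(\<theta>)))\<close>, while under the chain with transitions \<open>\<theta>\<^sub>i\<^sub>j / tbar \<theta> i\<close> it has
  probability at least \<open>exp (-T H(\<theta>))\<close>, so that these probabilities sum to at most \<open>N\<close> over a
  type class. Markov's inequality for the subadditive power \<open>p \<in> (0, 1]\<close>, together with the
  Gaussian moment \<open>E Y\<^sub>s\<^sup>p = P(s)\<^sup>p exp (-p (1 - p) \<Sum>\<^sub>k \<beta>\<^sub>s\<^sub>k\<^sup>2 / 2)\<close>, then shows that the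
  sum over a type class exceeds \<open>exp (-t z)\<close> only with probability exponentially small in
  \<open>t\<close>, once \<open>p\<close> is chosen by weak duality for the optimisation problem restricted to
  \<open>\<xi> = q \<beta> tbar \<theta>\<close>. Borel--Cantelli gives \<open>\<zeta> \<ge> z - \<epsilon>\<close> for every \<open>z\<close> below the optimal value.
\<close>

lemma powr_le_1_plus:
  fixes c p :: real
  assumes "0 \<le> c" "0 \<le> p" "p \<le> 1"
  shows "c powr p \<le> 1 + c"
proof (cases "c \<le> 1")
  case True
  then have "c powr p \<le> 1" using assms by (intro powr_le1) auto
  then show ?thesis using assms by linarith
next
  case False
  then have "c powr p \<le> c powr 1" using assms by (intro powr_mono) auto
  then show ?thesis using False by simp
qed

lemma mult_le_mult_plus_abs:
  fixes p a b c k :: real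
  assumes "0 \<le> p" "p \<le> 1" "\<bar>a - b\<bar> \<le> k"
  shows "p * a * c \<le> p * b * c + k * \<bar>c\<bar>"
proof -
  have "p * ((a - b) * c) \<le> \<bar>(a - b) * c\<bar>"
    using assms(1,2)
    by (metis abs_ge_self abs_mult abs_of_nonneg mult_left_le_one_le abs_ge_zero order_trans)
  also have "\<dots> \<le> k * \<bar>c\<bar>" using assms(3) by (simp add: abs_mult mult_right_mono)
  finally show ?thesis by (simp add: algebra_simps)
qed

lemma powr_add_le:
  fixes x y p :: real
  assumes "x \<ge> 0" "y \<ge> 0" "0 < p" "p \<le> 1"
  shows "(x + y) powr p \<le> x powr p + y powr p"
proof (cases "x + y = 0")
  case True
  then have "x = 0" "y = 0" using assms by auto
  then show ?thesis by simp
next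
  case False
  let ?S = "x + y"
  have S: "?S > 0" using False assms by simp
  have u: "x / ?S \<le> (x / ?S) powr p" "y / ?S \<le> (y / ?S) powr p"
  proof -
    have "x / ?S \<ge> 0" "x / ?S \<le> 1" "y / ?S \<ge> 0" "y / ?S \<le> 1" using assms S
      by (auto simp: field_simps)
    then have "(x / ?S) powr 1 \<le> (x / ?S) powr p" "(y / ?S) powr 1 \<le> (y / ?S) powr p"
      using assms powr_mono'[of p 1 "x / ?S"] powr_mono'[of p 1 "y / ?S"] by auto
    then show "x / ?S \<le> (x / ?S) powr p" "y / ?S \<le> (y / ?S) powr p"
      using powr_one[OF \<open>x / ?S \<ge> 0\<close>] powr_one[OF \<open>y / ?S \<ge> 0\<close>] by (simp_all del: powr_one')
  qed
  have "1 = x / ?S + y / ?S" using S by (simp add: add_divide_distrib[symmetric])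
  also have "\<dots> \<le> (x / ?S) powr p + (y / ?S) powr p" using u by simp
  also have "\<dots> = (x powr p + y powr p) / ?S powr p" by (simp add: powr_divide add_divide_distrib)
  finally show ?thesis using S by (simp add: field_simps)
qed

lemma powr_sum_le:
  fixes f :: "'a \<Rightarrow> real"
  assumes "finite C" "\<And>c. c \<in> C \<Longrightarrow> f c \<ge> 0" "0 < p" "p \<le> 1"
  shows "(\<Sum>c\<in>C. f c) powr p \<le> (\<Sum>c\<in>C. f c powr p)"
  using assms
proof (induction C rule: finite_induct)
  case (insert a C)
  have "(\<Sum>c\<in>insert a C. f c) powr p = (f a + (\<Sum>c\<in>C. f c)) powr p" using insert by simp
  also have "\<dots> \<le> f a powr p + (\<Sum>c\<in>C. f c) powr p"
    using insert by (intro powr_add_le) (auto intro: sum_nonneg)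
  also have "\<dots> \<le> f a powr p + (\<Sum>c\<in>C. f c powr p)" using insert by simp
  finally show ?case using insert by simp
qed simp

lemma power_le_exp_mult:
  fixes x \<eta> :: real
  assumes "x \<ge> 0" "\<eta> > 0"
  shows "x ^ m \<le> (real m / \<eta>) ^ m * exp (\<eta> * x)"
proof (cases "m = 0")
  case True
  then show ?thesis using assms by simp
next
  case False
  have e: "(1 + \<eta> * x / real m) ^ m \<le> exp (\<eta> * x)"
  proof (rule exp_ge_one_plus_x_over_n_power_n)
    have "\<eta> * x \<ge> 0" using assms by simp
    then show "\<eta> * x \<ge> - real m" by linarith
  qed (use False in auto)
  have "x = (real m / \<eta>) * (\<eta> * x / real m)" using False assms by (simp add: field_simps)
  also have "\<dots> \<le> (real m / \<eta>) * (1 + \<eta> * x / real m)" using assms by (intro mult_left_mono) auto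
  finally have "x ^ m \<le> ((real m / \<eta>) * (1 + \<eta> * x / real m)) ^ m" using assms
    by (intro power_mono) auto
  also have "\<dots> = (real m / \<eta>) ^ m * (1 + \<eta> * x / real m) ^ m" by (rule power_mult_distrib)
  also have "\<dots> \<le> (real m / \<eta>) ^ m * exp (\<eta> * x)" using e assms by (intro mult_left_mono) auto
  finally show ?thesis .
qed

text \<open>
  Weak duality for the scalar problem: if \<open>z\<close> bounds \<open>D + (1 - q)\<^sup>2 B\<close> from below on the feasible
  \<open>q\<close> (those with \<open>q\<^sup>2 B \<le> H\<close>), some \<open>p \<in> [p0, 1]\<close> nearly attains it in the dual expression;
  forcing \<open>p \<ge> p0\<close> costs \<open>2 p0 Bm\<close>.
\<close>

lemma exists_tilt_exponent:
  fixes D H B z p0 Bm :: real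
  assumes H: "H \<ge> 0" and B: "B \<ge> 0" "B \<le> Bm" and p0: "0 < p0" "p0 \<le> 1"
    and h: "\<And>q. 0 \<le> q \<Longrightarrow> q \<le> 1 \<Longrightarrow> q\<^sup>2 * B \<le> H \<Longrightarrow> z \<le> D + (1-q)\<^sup>2 * B"
  shows "\<exists>p. p0 \<le> p \<and> p \<le> 1 \<and> p * (z - 2 * p0 * Bm) \<le> p*(D+H) + p*(1-p)*B - H"
proof (cases "B \<le> H")
  case True
  have "z \<le> D" using h[of 1] True by simp
  moreover have "0 \<le> 2 * p0 * Bm" using p0 B by simp
  ultimately show ?thesis using p0 by (intro exI[of _ 1]) (auto simp: algebra_simps)
next
  case False
  hence Bpos: "B > 0" using H by linarith
  show ?thesis
  proof (cases "p0\<^sup>2 * B \<le> H")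
    case True
    define p where "p = sqrt (H / B)"
    have p2: "p\<^sup>2 = H / B" unfolding p_def using H Bpos by simp
    have pB: "p\<^sup>2 * B = H" using p2 Bpos by simp
    have pge: "p0 \<le> p" unfolding p_def using True Bpos p0
      by (metis less_eq_real_def mult_imp_le_div_pos real_le_rsqrt)
    have ple: "p \<le> 1" unfolding p_def using False Bpos by (simp add: real_sqrt_le_1_iff)
    have p0': "p \<ge> 0" using pge p0 by simp
    have zz: "z \<le> D + (1-p)\<^sup>2 * B" using h[of p] p0' ple pB by simp
    have "p * z \<le> p * (D + (1-p)\<^sup>2 * B)" using zz p0' by (simp add: mult_left_mono)
    also have "\<dots> = p*(D+H) + p*(1-p)*B - H"
      using pB by (simp add: power2_eq_square algebra_simps)
    finally have "p * z \<le> p*(D+H) + p*(1-p)*B - H" .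
    moreover have "p * (2 * p0 * Bm) \<ge> 0" using p0' p0 B by simp
    ultimately show ?thesis using pge ple by (intro exI[of _ p]) (auto simp: algebra_simps)
  next
    case small_H: False
    have zz: "z \<le> D + B" using h[of 0] H by simp
    have "p0 * (z - 2 * p0 * Bm) \<le> p0 * (D + B - 2 * p0*B)"
    proof (rule mult_left_mono)
      have "p0 * B \<le> p0 * Bm" using B p0 by (intro mult_left_mono) auto
      then show "z - 2 * p0 * Bm \<le> D + B - 2 * p0*B" using zz by linarith
    qed (use p0 in auto)
    also have "\<dots> \<le> p0*(D+H) + p0*(1-p0)*B - H"
      using small_H H p0 by (simp add: power2_eq_square algebra_simps)
        (smt (verit) mult_nonneg_nonneg)
    finally show ?thesis using p0 by (intro exI[of _ p0]) auto
  qed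
qed

section \<open>Walks as edge lists\<close>

fun walk_edges :: "nat list \<Rightarrow> (nat \<times> nat) list" where
  "walk_edges (x # y # ys) = (x, y) # walk_edges (y # ys)"
| "walk_edges _ = []"

lemma length_walk_edges[simp]: "length (walk_edges w) = length w - 1"
  by (induction w rule: walk_edges.induct) auto

lemma map_fst_walk_edges: "map fst (walk_edges w) = butlast w"
  by (induction w rule: walk_edges.induct) auto

lemma map_snd_walk_edges: "map snd (walk_edges w) = tl w"
  by (induction w rule: walk_edges.induct) auto

lemma walk_edges_Cons: "xs \<noteq> [] \<Longrightarrow> walk_edges (x # xs) = (x, hd xs) # walk_edges xs"
  by (cases xs) auto

lemma walk_edges_append_tl:
  "xs \<noteq> [] \<Longrightarrow> r \<noteq> [] \<Longrightarrow> last xs = hd r \<Longrightarrow> walk_edges (xs @ tl r) = walk_edges xs @ walk_edges r"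
proof (induction xs)
  case (Cons x xs)
  show ?case
  proof (cases "xs = []")
    case True
    then show ?thesis using Cons.prems by (cases r) auto
  next
    case False
    then have "walk_edges (x # xs @ tl r) = (x, hd xs) # walk_edges (xs @ tl r)"
      by (simp add: walk_edges_Cons)
    also have "\<dots> = (x, hd xs) # walk_edges xs @ walk_edges r" using Cons False by simp
    finally show ?thesis using False by (simp add: walk_edges_Cons)
  qed
qed simp

lemma walk_edges_snoc: "w \<noteq> [] \<Longrightarrow> walk_edges (w @ [j]) = walk_edges w @ [(last w, j)]"
  using walk_edges_append_tl[of w "[last w, j]"] by simp

lemma prod_list_walk_edges:
  "prod_list (map f (walk_edges s)) = (\<Prod>k<length s - 1. f (s!k, s!(k+1)))"
proof (induction s rule: walk_edges.induct)
  case (1 x y ys)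
  have "(\<Prod>k<length (x # y # ys) - 1. f ((x # y # ys) ! k, (x # y # ys) ! (k + 1)))
      = f (x, y) * (\<Prod>k<length (y # ys) - 1. f ((y # ys) ! k, (y # ys) ! (k + 1)))"
    by (simp add: prod.lessThan_Suc_shift del: prod.lessThan_Suc)
  then show ?case using 1 by simp
qed auto

lemma sum_list_map_conv_sum_nth: "sum_list (map g s) = (\<Sum>k<length s. g (s!k))"
  by (simp add: sum_list_sum_nth atLeast0LessThan)

lemma prod_list_pos_imp_pos:
  fixes g :: "'a \<Rightarrow> real"
  shows "prod_list (map g xs) > 0 \<Longrightarrow> (\<And>x. x \<in> set xs \<Longrightarrow> g x \<ge> 0) \<Longrightarrow> x \<in> set xs \<Longrightarrow> g x > 0"
proof (induction xs)
  case (Cons a xs)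
  have ga: "g a \<ge> 0" and gp: "prod_list (map g xs) \<ge> 0"
    using Cons.prems by (auto intro!: prod_list_nonneg)
  have pos: "g a * prod_list (map g xs) > 0" using Cons.prems by simp
  then have "g a > 0" "prod_list (map g xs) > 0" using ga gp
    by (auto simp: zero_less_mult_iff)
  then show ?case using Cons by auto
qed simp

lemma prod_list_eq_exp_sum_ln:
  fixes g :: "'a \<Rightarrow> real"
  shows "(\<And>x. x \<in> set xs \<Longrightarrow> g x > 0) \<Longrightarrow> prod_list (map g xs) = exp (sum_list (map (\<lambda>x. ln (g x)) xs))"
  by (induction xs) (auto simp: exp_add)

lemma sum_list_indicator_fst:
  "sum_list (map (\<lambda>e. if fst e = i then 1 else 0) xs) = real (count_list (map fst xs) i)"
  by (induction xs) auto

lemma sum_list_indicator_snd: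
  "sum_list (map (\<lambda>e. if snd e = i then 1 else 0) xs) = real (count_list (map snd xs) i)"
  by (induction xs) auto

lemma count_list_butlast_eq_tl:
  assumes "w \<noteq> []" "hd w = last w"
  shows "count_list (butlast w) i = count_list (tl w) i"
proof (cases w)
  case (Cons a ys)
  show ?thesis
  proof (cases "ys = []")
    case False
    then have "ys = butlast ys @ [a]" using assms Cons
      by (metis append_butlast_last_id last_ConsR list.sel(1))
    moreover have "butlast w = a # butlast ys" using Cons False by simp
    ultimately show ?thesis using Cons by (metis count_list.simps(2) count_list_append count_list.simps(1)
          list.sel(3) add.commute add_0)
  qed (use Cons in simp)
qed (use assms in simp)

lemma sum_list_eq_sum_count_list:
  fixes f :: "'a \<Rightarrow> real"
  shows "set xs \<subseteq> X \<Longrightarrow> finite X \<Longrightarrow>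
    sum_list (map f xs) = (\<Sum>e\<in>X. real (count_list xs e) * f e)"
proof (induction xs)
  case (Cons a xs)
  have "(\<Sum>e\<in>X. real (count_list (a # xs) e) * f e)
      = (\<Sum>e\<in>X. (if e = a then f e else 0) + real (count_list xs e) * f e)"
    by (intro sum.cong) (auto simp: algebra_simps)
  also have "\<dots> = f a + (\<Sum>e\<in>X. real (count_list xs e) * f e)"
    using Cons.prems by (simp add: sum.distrib)
  finally show ?case using Cons by simp
qed simp

lemma sum_list_walk_edges_count:
  fixes f :: "nat \<times> nat \<Rightarrow> real"
  assumes "set (walk_edges w) \<subseteq> A \<times> A" "finite A"
  shows "sum_list (map f (walk_edges w))
    = (\<Sum>i\<in>A. \<Sum>j\<in>A. real (count_list (walk_edges w) (i,j)) * f (i,j))"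
proof -
  have "sum_list (map f (walk_edges w)) = (\<Sum>e\<in>A\<times>A. real (count_list (walk_edges w) e) * f e)"
    using sum_list_eq_sum_count_list[OF assms(1)] assms(2) by simp
  also have "\<dots> = (\<Sum>i\<in>A. \<Sum>j\<in>A. real (count_list (walk_edges w) (i,j)) * f (i,j))"
    by (simp add: sum.cartesian_product)
  finally show ?thesis .
qed

lemma set_walk_edges: "set (walk_edges w) \<subseteq> set w \<times> set w"
  by (induction w rule: walk_edges.induct) auto

lemma path_prob_walk_edges:
  "s \<noteq> [] \<Longrightarrow> path_prob \<pi> P s = \<pi> (hd s) * prod_list (map (\<lambda>(i,j). P i j) (walk_edges s))"
  unfolding path_prob_def by (simp add: prod_list_walk_edges hd_conv_nth)

lemma sum_list_le_length_mult:
  fixes g :: "'a \<Rightarrow> real"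
  shows "(\<And>x. x \<in> set xs \<Longrightarrow> g x \<le> c) \<Longrightarrow> sum_list (map g xs) \<le> real (length xs) * c"
proof (induction xs)
  case (Cons a xs)
  then have "g a \<le> c" "sum_list (map g xs) \<le> real (length xs) * c" by auto
  then show ?case by (simp add: algebra_simps)
qed simp

lemma prod_list_le_1:
  fixes g :: "'a \<Rightarrow> real"
  shows "(\<And>x. x \<in> set xs \<Longrightarrow> 0 \<le> g x \<and> g x \<le> 1) \<Longrightarrow> prod_list (map g xs) \<le> 1"
proof (induction xs)
  case (Cons a xs)
  then have "0 \<le> g a" "g a \<le> 1" "prod_list (map g xs) \<le> 1" "0 \<le> prod_list (map g xs)"
    by (auto intro!: prod_list_nonneg)
  then show ?case by (simp add: mult_le_one)
qed simp

definition words :: "nat \<Rightarrow> nat set \<Rightarrow> nat list set" where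
  "words n A = {s. length s = n \<and> set s \<subseteq> A}"

lemma finite_words: "finite A \<Longrightarrow> finite (words n A)"
  unfolding words_def using finite_lists_length_eq[of A n] by (simp add: conj_commute)

lemma words_Suc: "words (Suc n) A = (\<lambda>(y,s). y # s) ` (A \<times> words n A)"
  unfolding words_def by (auto simp: length_Suc_conv image_iff)

lemma words_0: "words 0 A = {[]}" unfolding words_def by auto

lemma sum_words_walk_prob_Cons_le_1:
  fixes Q :: "nat \<Rightarrow> nat \<Rightarrow> real"
  assumes "finite A" and nn: "\<And>i j. i \<in> A \<Longrightarrow> j \<in> A \<Longrightarrow> Q i j \<ge> 0"
    and rs: "\<And>i. i \<in> A \<Longrightarrow> (\<Sum>j\<in>A. Q i j) \<le> 1"
  shows "x \<in> A \<Longrightarrow> (\<Sum>s\<in>words n A. prod_list (map (\<lambda>(i,j). Q i j) (walk_edges (x # s)))) \<le> 1"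
proof (induction n arbitrary: x)
  case 0
  then show ?case by (simp add: words_0)
next
  case (Suc n)
  have inj: "inj_on (\<lambda>(y,s). y # s) (A \<times> words n A)" by (auto simp: inj_on_def)
  have "(\<Sum>s\<in>words (Suc n) A. prod_list (map (\<lambda>(i,j). Q i j) (walk_edges (x # s))))
      = (\<Sum>(y,s)\<in>A \<times> words n A. prod_list (map (\<lambda>(i,j). Q i j) (walk_edges (x # y # s))))"
    unfolding words_Suc by (subst sum.reindex[OF inj]) (simp add: case_prod_beta)
  also have "\<dots>
      = (\<Sum>y\<in>A. Q x y * (\<Sum>s\<in>words n A. prod_list (map (\<lambda>(i,j). Q i j) (walk_edges (y # s)))))"
    by (simp add: sum.cartesian_product[symmetric] sum_distrib_left)
  also have "\<dots> \<le> (\<Sum>y\<in>A. Q x y * 1)"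
    using Suc nn by (intro sum_mono mult_left_mono) auto
  also have "\<dots> \<le> 1" using rs Suc.prems by simp
  finally show ?case .
qed

lemma sum_words_walk_prob_le_card:
  fixes Q :: "nat \<Rightarrow> nat \<Rightarrow> real"
  assumes "finite A" and nn: "\<And>i j. i \<in> A \<Longrightarrow> j \<in> A \<Longrightarrow> Q i j \<ge> 0"
    and rs: "\<And>i. i \<in> A \<Longrightarrow> (\<Sum>j\<in>A. Q i j) \<le> 1"
  shows "(\<Sum>s\<in>words (Suc n) A. prod_list (map (\<lambda>(i,j). Q i j) (walk_edges s))) \<le> card A"
proof -
  have inj: "inj_on (\<lambda>(y,s). y # s) (A \<times> words n A)" by (auto simp: inj_on_def)
  have "(\<Sum>s\<in>words (Suc n) A. prod_list (map (\<lambda>(i,j). Q i j) (walk_edges s)))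
      = (\<Sum>(y,s)\<in>A \<times> words n A. prod_list (map (\<lambda>(i,j). Q i j) (walk_edges (y # s))))"
    unfolding words_Suc by (subst sum.reindex[OF inj]) (simp add: case_prod_beta)
  also have "\<dots> = (\<Sum>y\<in>A. (\<Sum>s\<in>words n A. prod_list (map (\<lambda>(i,j). Q i j) (walk_edges (y # s)))))"
    by (simp add: sum.cartesian_product[symmetric])
  also have "\<dots> \<le> (\<Sum>y\<in>A. 1)" using sum_words_walk_prob_Cons_le_1[OF assms] by (intro sum_mono) auto
  finally show ?thesis by simp
qed

section \<open>Circulations and the tilting exponent\<close>

lemma tbar_nonneg: "\<theta> \<in> Delta N P \<Longrightarrow> tbar N \<theta> i \<ge> 0"
  unfolding Delta_def tbar_def by (auto intro: sum_nonneg)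

lemma tbar_le_1: assumes "\<theta> \<in> Delta N P" "i \<in> {1..N}" shows "tbar N \<theta> i \<le> 1"
proof -
  have "tbar N \<theta> i \<le> (\<Sum>i\<in>{1..N}. tbar N \<theta> i)"
    using assms by (intro member_le_sum) (auto intro: tbar_nonneg)
  also have "\<dots> = 1" using assms unfolding Delta_def tbar_def by auto
  finally show ?thesis .
qed

lemma entr_nonneg: assumes "\<theta> \<in> Delta N P" shows "entr N \<theta> \<ge> 0"
proof -
  have "(if \<theta> i j = 0 then 0 else \<theta> i j * ln (\<theta> i j / tbar N \<theta> i)) \<le> 0"
    if "i \<in> {1..N}" "j \<in> {1..N}" for i j
  proof (cases "\<theta> i j = 0")
    case False
    have pos: "\<theta> i j > 0" using False assms unfolding Delta_def by (auto simp: order_le_less)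
    have le: "\<theta> i j \<le> tbar N \<theta> i" unfolding tbar_def using assms that
      by (intro member_le_sum) (auto simp: Delta_def)
    have "ln (\<theta> i j / tbar N \<theta> i) \<le> 0" using pos le by simp
    then show ?thesis using False pos by (simp add: mult_nonneg_nonpos)
  qed simp
  then have "(\<Sum>i\<in>{1..N}. \<Sum>j\<in>{1..N}. (if \<theta> i j = 0 then 0 else \<theta> i j * ln (\<theta> i j / tbar N \<theta> i))) \<le> 0"
    by (intro sum_nonpos) auto
  then show ?thesis unfolding entr_def by simp
qed

definition signal_energy :: "nat \<Rightarrow> (nat \<Rightarrow> real) \<Rightarrow> (nat \<Rightarrow> nat \<Rightarrow> real) \<Rightarrow> real" where
  "signal_energy N \<beta> \<theta> = (\<Sum>i\<in>{1..N}. tbar N \<theta> i * (\<beta> i)\<^sup>2 / 2)"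

definition beta_sq_sum :: "nat \<Rightarrow> (nat \<Rightarrow> real) \<Rightarrow> real" where
  "beta_sq_sum N \<beta> = (\<Sum>i\<in>{1..N}. (\<beta> i)\<^sup>2)"

lemma signal_energy_nonneg: "\<theta> \<in> Delta N P \<Longrightarrow> signal_energy N \<beta> \<theta> \<ge> 0"
  unfolding signal_energy_def
  by (intro sum_nonneg divide_nonneg_pos mult_nonneg_nonneg) (auto intro: tbar_nonneg)

lemma beta_sq_sum_nonneg: "beta_sq_sum N \<beta> \<ge> 0"
  unfolding beta_sq_sum_def by (intro sum_nonneg) auto

lemma signal_energy_le_beta_sq_sum:
  assumes "\<theta> \<in> Delta N P" shows "signal_energy N \<beta> \<theta> \<le> beta_sq_sum N \<beta>"
  unfolding signal_energy_def beta_sq_sum_def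
proof (intro sum_mono)
  fix i assume "i \<in> {1..N}"
  then have "tbar N \<theta> i * (\<beta> i)\<^sup>2 \<le> (\<beta> i)\<^sup>2"
    using assms by (intro mult_left_le_one_le) (auto intro: tbar_le_1 tbar_nonneg)
  then show "tbar N \<theta> i * (\<beta> i)\<^sup>2 / 2 \<le> (\<beta> i)\<^sup>2"
    using zero_le_power2[of "\<beta> i"] by linarith
qed

lemma Jfun_objective_scaled_drift:
  fixes q :: real
  assumes \<theta>: "\<theta> \<in> Delta N P"
  shows "Jfun N \<theta> (\<lambda>i. q * \<beta> i * tbar N \<theta> i) = ereal (q\<^sup>2 * signal_energy N \<beta> \<theta>)"
    and "objective N P \<beta> \<theta> (\<lambda>i. q * \<beta> i * tbar N \<theta> i)
      = kl_div N \<theta> P + (1-q)\<^sup>2 * signal_energy N \<beta> \<theta>"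
proof -
  let ?S = "{i\<in>{1..N}. tbar N \<theta> i > 0}"
  have ext: "(\<Sum>i\<in>?S. f i) = (\<Sum>i\<in>{1..N}. f i)" if "\<And>i. i \<in> {1..N} \<Longrightarrow> tbar N \<theta> i = 0 \<Longrightarrow> f i = 0" for f
  proof (rule sum.mono_neutral_left)
    show "\<forall>i\<in>{1..N} - ?S. f i = 0"
    proof
      fix i assume i: "i \<in> {1..N} - ?S"
      then have "tbar N \<theta> i = 0" using tbar_nonneg[OF \<theta>, of i] by auto
      then show "f i = 0" using that i by auto
    qed
  qed auto
  have "(\<Sum>i\<in>?S. 1 / tbar N \<theta> i * ((q * \<beta> i * tbar N \<theta> i)\<^sup>2 / 2))
      = (\<Sum>i\<in>?S. q\<^sup>2 * (tbar N \<theta> i * (\<beta> i)\<^sup>2 / 2))"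
    by (intro sum.cong) (auto simp: power2_eq_square field_simps)
  also have "\<dots> = (\<Sum>i\<in>{1..N}. q\<^sup>2 * (tbar N \<theta> i * (\<beta> i)\<^sup>2 / 2))" by (rule ext) simp
  finally show "Jfun N \<theta> (\<lambda>i. q * \<beta> i * tbar N \<theta> i) = ereal (q\<^sup>2 * signal_energy N \<beta> \<theta>)"
    unfolding Jfun_def signal_energy_def by (simp add: sum_distrib_left)
  have "(\<Sum>i\<in>?S. tbar N \<theta> i * (\<beta> i - q * \<beta> i * tbar N \<theta> i / tbar N \<theta> i)\<^sup>2 / 2)
      = (\<Sum>i\<in>?S. (1-q)\<^sup>2 * (tbar N \<theta> i * (\<beta> i)\<^sup>2 / 2))"
    by (intro sum.cong) (auto simp: power2_eq_square field_simps)
  also have "\<dots> = (\<Sum>i\<in>{1..N}. (1-q)\<^sup>2 * (tbar N \<theta> i * (\<beta> i)\<^sup>2 / 2))" by (rule ext) simp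
  finally show "objective N P \<beta> \<theta> (\<lambda>i. q * \<beta> i * tbar N \<theta> i)
      = kl_div N \<theta> P + (1-q)\<^sup>2 * signal_energy N \<beta> \<theta>"
    unfolding objective_def signal_energy_def by (simp add: sum_distrib_left)
qed

lemma exists_tilt_exponent_Delta:
  assumes \<theta>: "\<theta> \<in> Delta N P"
    and z: "\<And>\<theta> \<xi>. \<theta> \<in> Delta N P \<Longrightarrow> Jfun N \<theta> \<xi> \<le> ereal (entr N \<theta>) \<Longrightarrow>
      z \<le> objective N P \<beta> \<theta> \<xi>"
    and p0: "0 < p0" "p0 \<le> 1"
  shows "\<exists>p. p0 \<le> p \<and> p \<le> 1 \<and> p * (z - 2 * p0 * beta_sq_sum N \<beta>) \<le>
     p*(kl_div N \<theta> P + entr N \<theta>) + p*(1-p)* signal_energy N \<beta> \<theta> - entr N \<theta>"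
proof (rule exists_tilt_exponent[OF entr_nonneg[OF \<theta>] signal_energy_nonneg[OF \<theta>]
      signal_energy_le_beta_sq_sum[OF \<theta>] p0])
  fix q :: real assume "0 \<le> q" "q \<le> 1" "q\<^sup>2 * signal_energy N \<beta> \<theta> \<le> entr N \<theta>"
  then show "z \<le> kl_div N \<theta> P + (1 - q)\<^sup>2 * signal_energy N \<beta> \<theta>"
    using z[OF \<theta>, of "\<lambda>i. q * \<beta> i * tbar N \<theta> i"] Jfun_objective_scaled_drift[OF \<theta>, where q=q and \<beta>=\<beta>]
    by simp
qed

section \<open>Empirical flows of closed-up paths\<close>

locale finite_chain =
  fixes N :: nat and P :: "nat \<Rightarrow> nat \<Rightarrow> real" and \<pi> \<beta> :: "nat \<Rightarrow> real"
  assumes N1: "N \<ge> 1" and rs: "row_stochastic N P" and irr: "irreducible_chain N P"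
    and st: "stationary_pos N P \<pi>"
begin

abbreviation "V \<equiv> {1..N}"

lemma P_nonneg: "i \<in> V \<Longrightarrow> j \<in> V \<Longrightarrow> P i j \<ge> 0"
  using rs unfolding row_stochastic_def by auto

lemma pi_pos: "i \<in> V \<Longrightarrow> \<pi> i > 0"
  using st unfolding stationary_pos_def by auto

lemma pi_le_1: assumes "i \<in> V" shows "\<pi> i \<le> 1"
proof -
  have "\<pi> i \<le> (\<Sum>i\<in>V. \<pi> i)" using assms pi_pos by (intro member_le_sum) (auto intro: less_imp_le)
  then show ?thesis using st unfolding stationary_pos_def by auto
qed

definition is_walk :: "nat list \<Rightarrow> bool" where
  "is_walk w \<longleftrightarrow> w \<noteq> [] \<and> set w \<subseteq> V \<and> (\<forall>e\<in>set (walk_edges w). P (fst e) (snd e) > 0)"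

lemma mpow_nonneg: "i \<in> V \<Longrightarrow> j \<in> V \<Longrightarrow> mpow N P n i j \<ge> 0"
proof (induction n arbitrary: j)
  case (Suc n)
  then show ?case by (auto intro!: sum_nonneg mult_nonneg_nonneg P_nonneg)
qed simp

lemma walk_if_mpow_pos: "i \<in> V \<Longrightarrow> j \<in> V \<Longrightarrow> mpow N P n i j > 0 \<Longrightarrow> \<exists>w. is_walk w \<and> hd w = i \<and> last w = j"
proof (induction n arbitrary: j)
  case 0
  then have "i = j" by (simp split: if_splits)
  moreover have "is_walk [i]" using 0 unfolding is_walk_def by simp
  ultimately show ?case by (intro exI[of _ "[i]"]) simp
next
  case (Suc n)
  have "\<exists>k\<in>V. mpow N P n i k * P k j > 0"
  proof (rule ccontr)
    assume "\<not> ?thesis"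
    then have "(\<Sum>k\<in>V. mpow N P n i k * P k j) \<le> 0" by (intro sum_nonpos) (auto simp: not_less)
    then show False using Suc.prems by simp
  qed
  then obtain k where k: "k \<in> V" "mpow N P n i k * P k j > 0" by blast
  have "mpow N P n i k \<ge> 0" "P k j \<ge> 0" using k Suc.prems by (auto intro: mpow_nonneg P_nonneg)
  then have pos: "mpow N P n i k > 0" "P k j > 0" using k(2) by (auto simp: zero_less_mult_iff)
  obtain w where w: "is_walk w" "hd w = i" "last w = k" using Suc.IH[OF Suc.prems(1) k(1) pos(1)]
    by blast
  have wne: "w \<noteq> []" using w unfolding is_walk_def by simp
  have walk_edges': "walk_edges (w @ [j]) = walk_edges w @ [(k, j)]" using walk_edges_snoc[OF wne] w
    by simp
  have "is_walk (w @ [j])" using w(1) Suc.prems(2) pos(2) unfolding is_walk_def walk_edges' by auto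
  moreover have "hd (w @ [j]) = i" using wne w by simp
  ultimately show ?case by (intro exI[of _ "w @ [j]"]) simp
qed

definition return_walk :: "nat \<Rightarrow> nat \<Rightarrow> nat list" where
  "return_walk i j = (SOME w. is_walk w \<and> hd w = i \<and> last w = j)"

lemma return_walk_props:
  assumes "i \<in> V" "j \<in> V"
  shows "is_walk (return_walk i j)" "hd (return_walk i j) = i" "last (return_walk i j) = j"
proof -
  obtain n where "mpow N P n i j > 0" using irr assms unfolding irreducible_chain_def by blast
  then have "\<exists>w. is_walk w \<and> hd w = i \<and> last w = j" using walk_if_mpow_pos assms by blast
  then have "is_walk (return_walk i j) \<and> hd (return_walk i j) = i \<and> last (return_walk i j) = j"
    unfolding return_walk_def by (rule someI_ex)
  then show "is_walk (return_walk i j)" "hd (return_walk i j) = i" "last (return_walk i j) = j"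
    by auto
qed

definition max_return_len :: nat where
  "max_return_len = Max ((\<lambda>(i,j). length (return_walk i j)) ` (V \<times> V))"

lemma return_walk_length:
  assumes "i \<in> V" "j \<in> V"
  shows "1 \<le> length (return_walk i j)" "length (return_walk i j) \<le> max_return_len"
proof -
  show "1 \<le> length (return_walk i j)"
    using return_walk_props(1)[OF assms] unfolding is_walk_def by (cases "return_walk i j") auto
  show "length (return_walk i j) \<le> max_return_len"
    unfolding max_return_len_def using assms by (intro Max_ge) auto
qed

definition walk_prob :: "nat list \<Rightarrow> real" where
  "walk_prob w = prod_list (map (\<lambda>(i,j). P i j) (walk_edges w))"

lemma walk_prob_pos: "is_walk w \<Longrightarrow> walk_prob w > 0"
  unfolding walk_prob_def is_walk_def
  by (induction w rule: walk_edges.induct) (auto simp: case_prod_beta)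

definition min_return_prob :: real where
  "min_return_prob = Min ((\<lambda>(i,j). walk_prob (return_walk i j)) ` (V \<times> V))"

lemma min_return_prob_pos: "min_return_prob > 0"
proof -
  have ne: "V \<times> V \<noteq> {}" using N1 by auto
  show ?thesis unfolding min_return_prob_def using ne
    by (subst Min_gr_iff) (auto intro!: walk_prob_pos return_walk_props)
qed

lemma min_return_prob_le: "i \<in> V \<Longrightarrow> j \<in> V \<Longrightarrow> min_return_prob \<le> walk_prob (return_walk i j)"
  unfolding min_return_prob_def by (rule Min_le) auto

text \<open>
  Appending a fixed return walk closes a path into a cycle; the edge frequencies \<open>emp_flow s\<close> of
  the cycle are then balanced, i.e.\ a point of \<open>Delta\<close>, at the cost of at most \<open>max_return_len\<close>
  extra steps.
\<close>

definition close_walk :: "nat list \<Rightarrow> nat list" where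
  "close_walk s = s @ tl (return_walk (last s) (hd s))"

abbreviation cycle_edges :: "nat list \<Rightarrow> (nat \<times> nat) list" where
  "cycle_edges s \<equiv> walk_edges (close_walk s)"

lemma close_walk_props:
  assumes "is_walk s"
  shows "is_walk (close_walk s)" "hd (close_walk s) = hd s" "last (close_walk s) = hd s"
    "cycle_edges s = walk_edges s @ walk_edges (return_walk (last s) (hd s))"
    "length (close_walk s) = length s + length (return_walk (last s) (hd s)) - 1"
proof -
  let ?r = "return_walk (last s) (hd s)"
  have sV: "set s \<subseteq> V" "s \<noteq> []" using assms unfolding is_walk_def by auto
  then have lh: "last s \<in> V" "hd s \<in> V" using last_in_set hd_in_set by blast+
  note r = return_walk_props[OF lh]
  have rne: "?r \<noteq> []" using r(1) unfolding is_walk_def by auto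
  show wsc: "cycle_edges s = walk_edges s @ walk_edges ?r" unfolding close_walk_def
    using walk_edges_append_tl[OF sV(2) rne] r(2) by simp
  show "hd (close_walk s) = hd s" unfolding close_walk_def using sV by simp
  show "last (close_walk s) = hd s"
  proof (cases "tl ?r = []")
    case True
    then have "?r = [hd ?r]" using rne by (cases ?r) auto
    then have "last ?r = hd ?r" by (metis last_ConsL)
    then show ?thesis using True r unfolding close_walk_def by simp
  next
    case False
    then have "last (tl ?r) = last ?r" using rne by (cases ?r) auto
    then show ?thesis using False r unfolding close_walk_def by simp
  qed
  show "length (close_walk s) = length s + length ?r - 1" unfolding close_walk_def using rne
    by (cases ?r) auto
  have "set (tl ?r) \<subseteq> set ?r" by (cases ?r) auto
  then have "set (close_walk s) \<subseteq> V" using sV r(1) unfolding close_walk_def is_walk_def by auto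
  moreover have "close_walk s \<noteq> []" using sV unfolding close_walk_def by simp
  moreover have "\<forall>e\<in>set (cycle_edges s). P (fst e) (snd e) > 0"
    unfolding wsc using assms r(1) unfolding is_walk_def by auto
  ultimately show "is_walk (close_walk s)" unfolding is_walk_def by blast
qed

lemma is_walk_path: assumes "s \<in> paths N \<pi> P t" "t \<ge> 1" shows "is_walk s"
proof -
  have s: "length s = t" "set s \<subseteq> V" "path_prob \<pi> P s > 0" using assms unfolding paths_def by auto
  then have ne: "s \<noteq> []" using assms by auto
  have hdV: "hd s \<in> V" using s ne hd_in_set by blast
  have "\<pi> (hd s) * walk_prob s > 0" using s(3) path_prob_walk_edges[OF ne] unfolding walk_prob_def
    by simp
  then have "walk_prob s > 0" using pi_pos[OF hdV] by (simp add: zero_less_mult_iff)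
  have nn: "\<And>e. e \<in> set (walk_edges s) \<Longrightarrow> (\<lambda>(i,j). P i j) e \<ge> 0"
  proof -
    fix e assume "e \<in> set (walk_edges s)"
    then have "e \<in> set s \<times> set s" using set_walk_edges[of s] by blast
    then have "fst e \<in> V" "snd e \<in> V" using s(2) by (auto simp del: atLeastAtMost_iff)
    then show "(\<lambda>(i,j). P i j) e \<ge> 0" using P_nonneg by (simp add: case_prod_beta)
  qed
  have "\<forall>e\<in>set (walk_edges s). P (fst e) (snd e) > 0"
  proof
    fix e assume e: "e \<in> set (walk_edges s)"
    have "(\<lambda>(i,j). P i j) e > 0"
      using prod_list_pos_imp_pos[of "\<lambda>(i,j). P i j" "walk_edges s", OF _ nn e] \<open>walk_prob s > 0\<close>
      unfolding walk_prob_def by blast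
    then show "P (fst e) (snd e) > 0" by (simp add: case_prod_beta)
  qed
  then show ?thesis unfolding is_walk_def using ne s by auto
qed

definition cycle_len :: "nat list \<Rightarrow> nat" where
  "cycle_len s = length (cycle_edges s)"

definition edge_count :: "nat list \<Rightarrow> nat \<Rightarrow> nat \<Rightarrow> nat" where
  "edge_count s i j = count_list (cycle_edges s) (i,j)"

definition emp_flow :: "nat list \<Rightarrow> nat \<Rightarrow> nat \<Rightarrow> real" where
  "emp_flow s i j = real (edge_count s i j) / real (cycle_len s)"

lemma walk_edges_subset: assumes "is_walk w" shows "set (walk_edges w) \<subseteq> V \<times> V"
  using set_walk_edges[of w] assms unfolding is_walk_def by blast

lemma cycle_len_bounds: assumes "is_walk s"
  shows "length s - 1 \<le> cycle_len s" "cycle_len s \<le> length s + max_return_len - 2"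
proof -
  have hl: "last s \<in> V" "hd s \<in> V" using assms unfolding is_walk_def
    using last_in_set hd_in_set by blast+
  have "cycle_len s = length s + length (return_walk (last s) (hd s)) - 2" unfolding cycle_len_def
    using close_walk_props(5)[OF assms] by simp
  then show "length s - 1 \<le> cycle_len s" "cycle_len s \<le> length s + max_return_len - 2"
    using return_walk_length[OF hl] by auto
qed

lemma sum_list_close_walk_edges:
  fixes f :: "nat \<times> nat \<Rightarrow> real"
  assumes "is_walk s" "cycle_len s > 0"
  shows "sum_list (map f (cycle_edges s))
    = real (cycle_len s) * (\<Sum>i\<in>V. \<Sum>j\<in>V. emp_flow s i j * f (i,j))"
proof -
  have "sum_list (map f (cycle_edges s)) = (\<Sum>i\<in>V. \<Sum>j\<in>V. real (edge_count s i j) * f (i,j))"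
    unfolding edge_count_def
    by (rule sum_list_walk_edges_count[OF walk_edges_subset[OF close_walk_props(1)[OF assms(1)]]]) simp
  also have "\<dots> = real (cycle_len s) * (\<Sum>i\<in>V. \<Sum>j\<in>V. emp_flow s i j * f (i,j))"
    unfolding emp_flow_def using assms(2) by (simp add: sum_distrib_left)
  finally show ?thesis .
qed

lemma edge_count_pos:
  assumes "is_walk s" "edge_count s i j > 0"
  shows "(i,j) \<in> set (cycle_edges s)" "i \<in> V" "j \<in> V" "P i j > 0"
proof -
  show e: "(i,j) \<in> set (cycle_edges s)" using assms(2) count_notin[of "(i,j)" "cycle_edges s"]
    unfolding edge_count_def by (metis less_irrefl)
  then show "i \<in> V" "j \<in> V" using walk_edges_subset[OF close_walk_props(1)[OF assms(1)]] by auto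
  show "P i j > 0" using e close_walk_props(1)[OF assms(1)] unfolding is_walk_def by force
qed

lemma emp_flow_nonneg: "emp_flow s i j \<ge> 0" unfolding emp_flow_def by simp

lemma tbar_emp_flow: assumes "is_walk s" "cycle_len s > 0" "i \<in> V"
  shows "tbar N (emp_flow s) i = real (count_list (butlast (close_walk s)) i) / real (cycle_len s)"
    "(\<Sum>j\<in>V. emp_flow s j i) = real (count_list (tl (close_walk s)) i) / real (cycle_len s)"
proof -
  have "real (count_list (butlast (close_walk s)) i)
      = sum_list (map (\<lambda>e. if fst e = i then 1 else 0) (cycle_edges s))"
    using sum_list_indicator_fst[of i "cycle_edges s"] by (simp add: map_fst_walk_edges)
  also have "\<dots> = real (cycle_len s) * (\<Sum>a\<in>V. \<Sum>j\<in>V. emp_flow s a j * (if a = i then 1 else 0))"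
    using sum_list_close_walk_edges[OF assms(1,2), of "\<lambda>e. if fst e = i then 1 else 0"] by simp
  also have "(\<Sum>a\<in>V. \<Sum>j\<in>V. emp_flow s a j * (if a = i then 1 else 0))
      = (\<Sum>a\<in>V. if a = i then (\<Sum>j\<in>V. emp_flow s a j) else 0)"
    by (intro sum.cong) auto
  also have "\<dots> = tbar N (emp_flow s) i" unfolding tbar_def using assms(3) by (subst sum.delta) auto
  finally show "tbar N (emp_flow s) i
      = real (count_list (butlast (close_walk s)) i) / real (cycle_len s)"
    using assms(2) by (simp add: field_simps)
  have "real (count_list (tl (close_walk s)) i)
      = sum_list (map (\<lambda>e. if snd e = i then 1 else 0) (cycle_edges s))"
    using sum_list_indicator_snd[of i "cycle_edges s"] by (simp add: map_snd_walk_edges)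
  also have "\<dots> = real (cycle_len s) * (\<Sum>a\<in>V. \<Sum>j\<in>V. emp_flow s a j * (if j = i then 1 else 0))"
    using sum_list_close_walk_edges[OF assms(1,2), of "\<lambda>e. if snd e = i then 1 else 0"] by simp
  also have "\<dots> = real (cycle_len s) * (\<Sum>j\<in>V. emp_flow s j i)"
    using assms(3) by (simp add: if_distrib cong: if_cong)
  finally show "(\<Sum>j\<in>V. emp_flow s j i)
      = real (count_list (tl (close_walk s)) i) / real (cycle_len s)"
    using assms(2) by (simp add: field_simps)
qed

lemma emp_flow_Delta: assumes "is_walk s" "cycle_len s > 0" shows "emp_flow s \<in> Delta N P"
proof -
  have "real (cycle_len s) = sum_list (map (\<lambda>e. 1) (cycle_edges s))" unfolding cycle_len_def
    by (simp add: sum_list_triv)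
  also have "\<dots> = real (cycle_len s) * (\<Sum>i\<in>V. \<Sum>j\<in>V. emp_flow s i j)"
    using sum_list_close_walk_edges[OF assms, of "\<lambda>e. 1"] by simp
  finally have tot: "(\<Sum>i\<in>V. \<Sum>j\<in>V. emp_flow s i j) = 1" using assms(2) by simp
  have cl: "close_walk s \<noteq> []" "hd (close_walk s) = last (close_walk s)"
    using close_walk_props[OF assms(1)] unfolding is_walk_def by auto
  have bal: "(\<Sum>j\<in>V. emp_flow s i j) = (\<Sum>j\<in>V. emp_flow s j i)" if "i \<in> V" for i
    using tbar_emp_flow[OF assms that] count_list_butlast_eq_tl[OF cl] unfolding tbar_def by simp
  have ed: "emp_flow s i j = 0" if "(i,j) \<notin> edges N P" for i j
  proof (rule ccontr)
    assume "emp_flow s i j \<noteq> 0"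
    then have "edge_count s i j > 0" unfolding emp_flow_def by simp
    then show False using edge_count_pos[OF assms(1)] that unfolding edges_def by auto
  qed
  show ?thesis unfolding Delta_def using tot bal ed emp_flow_nonneg by auto
qed

text \<open>
  The probability of \<open>w\<close> under the chain with transitions \<open>\<theta> i j / tbar N \<theta> i\<close>; it is at least
  \<open>exp (- cycle_len s * entr N \<theta>)\<close> on the paths of type \<open>\<theta>\<close>, which is how the entropy term enters.
\<close>

definition flow_walk_prob :: "(nat \<Rightarrow> nat \<Rightarrow> real) \<Rightarrow> nat list \<Rightarrow> real" where
  "flow_walk_prob \<theta> w = prod_list (map (\<lambda>(i,j). \<theta> i j / tbar N \<theta> i) (walk_edges w))"

lemma Delta_le_tbar: "i \<in> V \<Longrightarrow> j \<in> V \<Longrightarrow> \<theta> \<in> Delta N P \<Longrightarrow> \<theta> i j \<le> tbar N \<theta> i"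
  unfolding tbar_def by (rule member_le_sum) (auto simp: Delta_def)

lemma flow_transition_bounds: assumes "\<theta> \<in> Delta N P" "i \<in> V" "j \<in> V"
  shows "\<theta> i j / tbar N \<theta> i \<ge> 0" "\<theta> i j / tbar N \<theta> i \<le> 1"
proof -
  have a: "\<theta> i j \<ge> 0" using assms(1) by (simp add: Delta_def)
  have b: "\<theta> i j \<le> tbar N \<theta> i" using Delta_le_tbar[OF assms(2,3,1)] .
  show "\<theta> i j / tbar N \<theta> i \<ge> 0" using a tbar_nonneg[OF assms(1)] by simp
  show "\<theta> i j / tbar N \<theta> i \<le> 1"
  proof (cases "tbar N \<theta> i = 0")
    case False
    then have "tbar N \<theta> i > 0" using tbar_nonneg[OF assms(1), of i] by simp
    then show ?thesis using b by simp
  qed simp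
qed

lemma flow_walk_prob_bounds:
  assumes "\<theta> \<in> Delta N P" "set w \<subseteq> V"
  shows "0 \<le> flow_walk_prob \<theta> w" "flow_walk_prob \<theta> w \<le> 1"
proof -
  have "0 \<le> (\<lambda>(i,j). \<theta> i j / tbar N \<theta> i) e \<and> (\<lambda>(i,j). \<theta> i j / tbar N \<theta> i) e \<le> 1"
    if "e \<in> set (walk_edges w)" for e
  proof -
    have "e \<in> set w \<times> set w" using set_walk_edges that by blast
    then have "fst e \<in> V" "snd e \<in> V" using assms(2) by auto
    then show ?thesis using flow_transition_bounds[OF assms(1)] by (simp add: case_prod_beta)
  qed
  then show "0 \<le> flow_walk_prob \<theta> w" "flow_walk_prob \<theta> w \<le> 1"
    unfolding flow_walk_prob_def by (auto intro!: prod_list_nonneg prod_list_le_1)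
qed

lemma sum_words_flow_walk_prob_le: assumes "\<theta> \<in> Delta N P"
  shows "(\<Sum>s\<in>words (Suc n) V. flow_walk_prob \<theta> s) \<le> real N"
proof -
  have "(\<Sum>s\<in>words (Suc n) V. flow_walk_prob \<theta> s) \<le> real (card V)" unfolding flow_walk_prob_def
  proof (rule sum_words_walk_prob_le_card)
    show "\<And>i j. i \<in> V \<Longrightarrow> j \<in> V \<Longrightarrow> 0 \<le> \<theta> i j / tbar N \<theta> i" using flow_transition_bounds[OF assms]
      by blast
    fix i assume i: "i \<in> V"
    show "(\<Sum>j\<in>V. \<theta> i j / tbar N \<theta> i) \<le> 1"
    proof (cases "tbar N \<theta> i = 0")
      case False
      then show ?thesis by (simp add: sum_divide_distrib[symmetric] tbar_def)
    qed simp
  qed simp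
  then show ?thesis by simp
qed

lemma emp_flow_pos: assumes "is_walk s" "cycle_len s > 0" "i \<in> V" "j \<in> V" "emp_flow s i j \<noteq> 0"
  shows "emp_flow s i j > 0" "tbar N (emp_flow s) i > 0" "P i j > 0"
proof -
  have c: "edge_count s i j > 0" using assms(5) unfolding emp_flow_def by simp
  show tp: "emp_flow s i j > 0" using c assms(2) unfolding emp_flow_def by simp
  show "P i j > 0" using edge_count_pos[OF assms(1) c] by simp
  have "emp_flow s i j \<le> tbar N (emp_flow s) i"
    using Delta_le_tbar[OF assms(3,4) emp_flow_Delta[OF assms(1,2)]] .
  then show "tbar N (emp_flow s) i > 0" using tp by simp
qed

lemma sum_ln_P_close_walk: assumes "is_walk s" "cycle_len s > 0"
  shows "sum_list (map (\<lambda>e. ln (P (fst e) (snd e))) (cycle_edges s))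
    = - real (cycle_len s) * (kl_div N (emp_flow s) P + entr N (emp_flow s))"
proof -
  let ?t = "emp_flow s"
  have trm: "?t i j * ln (P i j) = (if ?t i j = 0 then 0 else ?t i j * ln (?t i j / tbar N ?t i))
     - (if ?t i j = 0 then 0 else ?t i j * ln (?t i j / (tbar N ?t i * P i j)))"
    if "i \<in> V" "j \<in> V" for i j
  proof (cases "?t i j = 0")
    case False
    note f = emp_flow_pos[OF assms that False]
    have "ln (?t i j / (tbar N ?t i * P i j)) = ln (?t i j) - ln (tbar N ?t i) - ln (P i j)"
      using f by (simp add: ln_div ln_mult)
    moreover have "ln (?t i j / tbar N ?t i) = ln (?t i j) - ln (tbar N ?t i)" using f
      by (simp add: ln_div)
    ultimately have d: "ln (?t i j / tbar N ?t i) - ln (?t i j / (tbar N ?t i * P i j)) = ln (P i j)"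
      by linarith
    have "?t i j * ln (P i j)
        = ?t i j * ln (?t i j / tbar N ?t i) - ?t i j * ln (?t i j / (tbar N ?t i * P i j))"
      unfolding d[symmetric] by (simp add: right_diff_distrib)
    then show ?thesis using False by simp
  qed simp
  have eq: "(\<Sum>i\<in>V. \<Sum>j\<in>V. ?t i j * ln (P i j)) = - (kl_div N ?t P + entr N ?t)"
    unfolding kl_div_def entr_def by (simp add: trm sum_subtractf)
  have A: "sum_list (map (\<lambda>e. ln (P (fst e) (snd e))) (cycle_edges s))
      = real (cycle_len s) * (\<Sum>i\<in>V. \<Sum>j\<in>V. ?t i j * ln (P i j))"
    using sum_list_close_walk_edges[OF assms, of "\<lambda>e. ln (P (fst e) (snd e))"] by simp
  show ?thesis unfolding A eq by (simp add: algebra_simps)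
qed

lemma sum_ln_flow_close_walk: assumes "is_walk s" "cycle_len s > 0"
  shows "sum_list (map (\<lambda>e. ln (emp_flow s (fst e) (snd e) / tbar N (emp_flow s) (fst e))) (cycle_edges s))
    = - real (cycle_len s) * entr N (emp_flow s)"
proof -
  let ?t = "emp_flow s"
  have "(\<Sum>i\<in>V. \<Sum>j\<in>V. ?t i j * ln (?t i j / tbar N ?t i))
     = (\<Sum>i\<in>V. \<Sum>j\<in>V. (if ?t i j = 0 then 0 else ?t i j * ln (?t i j / tbar N ?t i)))"
    by (intro sum.cong refl) simp
  then have "(\<Sum>i\<in>V. \<Sum>j\<in>V. ?t i j * ln (?t i j / tbar N ?t i)) = - entr N ?t"
    unfolding entr_def by simp
  then show ?thesis
    using sum_list_close_walk_edges[OF assms, of "\<lambda>e. ln (?t (fst e) (snd e) / tbar N ?t (fst e))"] by simp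
qed

lemma sum_beta_sq_close_walk: assumes "is_walk s" "cycle_len s > 0"
  shows "sum_list (map (\<lambda>e. (\<beta> (fst e))\<^sup>2) (cycle_edges s))
    = 2 * real (cycle_len s) * signal_energy N \<beta> (emp_flow s)"
proof -
  have "(\<Sum>i\<in>V. \<Sum>j\<in>V. emp_flow s i j * (\<beta> i)\<^sup>2) = (\<Sum>i\<in>V. tbar N (emp_flow s) i * (\<beta> i)\<^sup>2)"
    unfolding tbar_def by (simp add: sum_distrib_right)
  also have "\<dots> = 2 * signal_energy N \<beta> (emp_flow s)" unfolding signal_energy_def
    by (simp add: sum_distrib_left)
  finally show ?thesis using sum_list_close_walk_edges[OF assms, of "\<lambda>e. (\<beta> (fst e))\<^sup>2"] by simp
qed

lemma return_walk_of_walk: assumes "is_walk s"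
  shows "last s \<in> V" "hd s \<in> V" "is_walk (return_walk (last s) (hd s))"
    "length (return_walk (last s) (hd s)) \<le> max_return_len"
proof -
  show h: "last s \<in> V" "hd s \<in> V" using assms unfolding is_walk_def using last_in_set hd_in_set
    by blast+
  show "is_walk (return_walk (last s) (hd s))" using return_walk_props[OF h] by simp
  show "length (return_walk (last s) (hd s)) \<le> max_return_len" using return_walk_length[OF h]
    by simp
qed

lemma walk_prob_le: assumes "is_walk s" "cycle_len s > 0"
  shows "walk_prob s
    \<le> exp (- real (cycle_len s) * (kl_div N (emp_flow s) P + entr N (emp_flow s))) / min_return_prob"
proof -
  let ?r = "return_walk (last s) (hd s)"
  have split: "walk_prob (close_walk s) = walk_prob s * walk_prob ?r"
    unfolding walk_prob_def close_walk_props(4)[OF assms(1)] by simp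
  have "walk_prob (close_walk s)
      = exp (sum_list (map (\<lambda>e. ln ((\<lambda>(i,j). P i j) e)) (cycle_edges s)))"
    unfolding walk_prob_def using close_walk_props(1)[OF assms(1)] unfolding is_walk_def
    by (intro prod_list_eq_exp_sum_ln) (auto simp: case_prod_beta)
  also have "\<dots> = exp (- real (cycle_len s) * (kl_div N (emp_flow s) P + entr N (emp_flow s)))"
    using sum_ln_P_close_walk[OF assms] by (simp add: case_prod_beta)
  finally have e: "walk_prob s * walk_prob ?r
      = exp (- real (cycle_len s) * (kl_div N (emp_flow s) P + entr N (emp_flow s)))"
    using split by simp
  have rpos: "walk_prob ?r \<ge> min_return_prob"
    using min_return_prob_le return_walk_of_walk[OF assms(1)] by simp
  have "walk_prob s \<ge> 0" using walk_prob_pos[OF assms(1)] by simp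
  then have "walk_prob s * min_return_prob \<le> walk_prob s * walk_prob ?r" using rpos
    by (intro mult_left_mono) auto
  then have "walk_prob s * min_return_prob
      \<le> exp (- real (cycle_len s) * (kl_div N (emp_flow s) P + entr N (emp_flow s)))"
    using e by simp
  then show ?thesis using min_return_prob_pos by (simp add: field_simps)
qed

lemma flow_walk_prob_ge: assumes "is_walk s" "cycle_len s > 0"
  shows "exp (- real (cycle_len s) * entr N (emp_flow s)) \<le> flow_walk_prob (emp_flow s) s"
proof -
  let ?r = "return_walk (last s) (hd s)"
  let ?t = "emp_flow s"
  have D: "?t \<in> Delta N P" by (rule emp_flow_Delta[OF assms])
  have split: "flow_walk_prob ?t (close_walk s) = flow_walk_prob ?t s * flow_walk_prob ?t ?r"
    unfolding flow_walk_prob_def close_walk_props(4)[OF assms(1)] by simp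
  have pos: "(\<lambda>(i,j). ?t i j / tbar N ?t i) e > 0" if "e \<in> set (cycle_edges s)" for e
  proof -
    obtain i j where e: "e = (i,j)" by (cases e)
    have "edge_count s i j > 0" using that e count_list_0_iff[of "cycle_edges s" "(i,j)"]
      unfolding edge_count_def by simp
    then have "?t i j \<noteq> 0" using assms(2) unfolding emp_flow_def by simp
    moreover have "i \<in> V" "j \<in> V"
      using walk_edges_subset[OF close_walk_props(1)[OF assms(1)]] that e by auto
    ultimately show ?thesis using emp_flow_pos[OF assms] e by auto
  qed
  have "flow_walk_prob ?t (close_walk s)
      = exp (sum_list (map (\<lambda>e. ln ((\<lambda>(i,j). ?t i j / tbar N ?t i) e)) (cycle_edges s)))"
    unfolding flow_walk_prob_def using pos by (intro prod_list_eq_exp_sum_ln) auto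
  also have "\<dots> = exp (- real (cycle_len s) * entr N ?t)"
    using sum_ln_flow_close_walk[OF assms] by (simp add: case_prod_beta)
  finally have e: "flow_walk_prob ?t s * flow_walk_prob ?t ?r = exp (- real (cycle_len s) * entr N ?t)"
    using split by simp
  have r1: "flow_walk_prob ?t ?r \<le> 1"
    using flow_walk_prob_bounds(2)[OF D] return_walk_of_walk(3)[OF assms(1)]
    unfolding is_walk_def by blast
  have s0: "flow_walk_prob ?t s \<ge> 0"
    using flow_walk_prob_bounds(1)[OF D] assms(1) unfolding is_walk_def by blast
  have "flow_walk_prob ?t s * flow_walk_prob ?t ?r \<le> flow_walk_prob ?t s" using r1 s0
    by (simp add: mult_left_le)
  then show ?thesis using e by simp
qed

lemma signal_energy_emp_flow_le: assumes "is_walk s" "cycle_len s > 0"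
  shows "2 * real (cycle_len s) * signal_energy N \<beta> (emp_flow s)
    \<le> sum_list (map (\<lambda>x. (\<beta> x)\<^sup>2) s) + real max_return_len * beta_sq_sum N \<beta>"
proof -
  let ?r = "return_walk (last s) (hd s)"
  let ?g = "\<lambda>x. (\<beta> x)\<^sup>2"
  have "2 * real (cycle_len s) * signal_energy N \<beta> (emp_flow s)
      = sum_list (map ?g (butlast (close_walk s)))"
  proof -
    have "map (\<lambda>e. (\<beta> (fst e))\<^sup>2) (cycle_edges s) = map ?g (map fst (cycle_edges s))" by simp
    then show ?thesis using sum_beta_sq_close_walk[OF assms] by (simp only: map_fst_walk_edges)
  qed
  also have "\<dots> \<le> sum_list (map ?g (close_walk s))"
  proof -
    have ne: "close_walk s \<noteq> []" using close_walk_props(1)[OF assms(1)] unfolding is_walk_def by simp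
    have "sum_list (map ?g (close_walk s)) = sum_list (map ?g (butlast (close_walk s) @ [last (close_walk s)]))"
      by (simp only: append_butlast_last_id[OF ne])
    then show ?thesis by simp
  qed
  also have "\<dots> = sum_list (map ?g s) + sum_list (map ?g (tl ?r))" unfolding close_walk_def by simp
  also have "sum_list (map ?g (tl ?r)) \<le> real (length (tl ?r)) * beta_sq_sum N \<beta>"
  proof (rule sum_list_le_length_mult)
    fix x assume "x \<in> set (tl ?r)"
    then have "x \<in> set ?r" by (cases ?r) auto
    then have "x \<in> V" using return_walk_of_walk(3)[OF assms(1)] unfolding is_walk_def by auto
    then show "?g x \<le> beta_sq_sum N \<beta>" unfolding beta_sq_sum_def by (rule member_le_sum) auto
  qed
  also have "real (length (tl ?r)) * beta_sq_sum N \<beta> \<le> real max_return_len * beta_sq_sum N \<beta>"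
    using return_walk_of_walk(4)[OF assms(1)] beta_sq_sum_nonneg by (intro mult_right_mono) auto
  finally show ?thesis by simp
qed

lemma path_prob_powr_le:
  fixes p :: real
  assumes w: "is_walk s" and T0: "cycle_len s > 0" and pos: "path_prob \<pi> P s > 0"
    and p: "0 \<le> p" "p \<le> 1"
  shows "path_prob \<pi> P s powr p
    \<le> (1 + 1 / min_return_prob)
       * exp (- p * cycle_len s * (kl_div N (emp_flow s) P + entr N (emp_flow s)))"
proof -
  let ?E = "exp (- cycle_len s * (kl_div N (emp_flow s) P + entr N (emp_flow s)))"
  have ne: "s \<noteq> []" using w unfolding is_walk_def by simp
  then have hd: "hd s \<in> V" using w hd_in_set unfolding is_walk_def by blast
  have "path_prob \<pi> P s = \<pi> (hd s) * walk_prob s"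
    using path_prob_walk_edges[OF ne] unfolding walk_prob_def by simp
  also have "\<dots> \<le> walk_prob s"
    using pi_le_1[OF hd] pi_pos[OF hd] walk_prob_pos[OF w] by (intro mult_left_le_one_le) auto
  also have "\<dots> \<le> ?E / min_return_prob" using walk_prob_le[OF w T0] by simp
  finally have "path_prob \<pi> P s powr p \<le> (?E / min_return_prob) powr p"
    using pos p by (intro powr_mono2) auto
  also have "\<dots> = (1 / min_return_prob) powr p
      * exp (- p * cycle_len s * (kl_div N (emp_flow s) P + entr N (emp_flow s)))"
    by (simp add: powr_divide exp_powr_real algebra_simps)
  also have "\<dots> \<le> (1 + 1 / min_return_prob)
      * exp (- p * cycle_len s * (kl_div N (emp_flow s) P + entr N (emp_flow s)))"
    using powr_le_1_plus[of "1 / min_return_prob" p] p min_return_prob_pos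
      by (intro mult_right_mono) auto
  finally show ?thesis .
qed

lemma prod_exp_beta_le:
  fixes p :: real
  assumes w: "is_walk s" and T0: "cycle_len s > 0" and p: "0 \<le> p" "p \<le> 1"
  shows "(\<Prod>k<length s. exp ((p * \<beta> (s!k))\<^sup>2 / 2 - p * (\<beta> (s!k))\<^sup>2 / 2))
    \<le> exp (- p * (1 - p) * cycle_len s * signal_energy N \<beta> (emp_flow s)
       + max_return_len * beta_sq_sum N \<beta>)"
proof -
  define S where "S = sum_list (map (\<lambda>x. (\<beta> x)\<^sup>2) s)"
  have "(\<Prod>k<length s. exp ((p * \<beta> (s!k))\<^sup>2 / 2 - p * (\<beta> (s!k))\<^sup>2 / 2))
      = exp (\<Sum>k<length s. (p * p - p) / 2 * (\<beta> (s!k))\<^sup>2)"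
    by (simp add: exp_sum power2_eq_square algebra_simps diff_divide_distrib)
  also have "(\<Sum>k<length s. (p * p - p) / 2 * (\<beta> (s!k))\<^sup>2) = (p * p - p) / 2 * S"
    unfolding S_def sum_list_map_conv_sum_nth by (simp add: sum_distrib_left)
  also have "(p * p - p) / 2 * S
      \<le> (p * p - p) / 2
        * (2 * cycle_len s * signal_energy N \<beta> (emp_flow s) - max_return_len * beta_sq_sum N \<beta>)"
    using signal_energy_emp_flow_le[OF w T0] mult_left_le[OF p(2) p(1)] unfolding S_def
    by (intro mult_left_mono_neg) auto
  also have "\<dots> \<le> - p * (1 - p) * cycle_len s * signal_energy N \<beta> (emp_flow s)
      + max_return_len * beta_sq_sum N \<beta>"
  proof -
    have "p - p * p \<le> 2" using p zero_le_square[of p] by linarith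
    then have "(p - p * p) / 2 \<le> 1" by simp
    then have "(p - p * p) / 2 * (max_return_len * beta_sq_sum N \<beta>) \<le> max_return_len * beta_sq_sum N \<beta>"
      using beta_sq_sum_nonneg
      by (intro mult_left_le_one_le) (auto intro: mult_left_le[OF p(2) p(1)])
    then show ?thesis by (simp add: field_simps)
  qed
  finally show ?thesis by simp
qed

lemma paths_subset_words: "paths N \<pi> P t \<subseteq> words t V" unfolding paths_def words_def by auto

lemma finite_paths: "finite (paths N \<pi> P t)"
  using finite_subset[OF paths_subset_words finite_words[of V t]] by simp

lemma exists_successor: assumes "i \<in> V" shows "\<exists>j\<in>V. P i j > 0"
proof (rule ccontr)
  assume "\<not> ?thesis"
  then have "(\<Sum>j\<in>V. P i j) \<le> 0" by (intro sum_nonpos) (auto simp: not_less)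
  then show False using rs assms unfolding row_stochastic_def by auto
qed

lemma paths_nonempty: assumes "t \<ge> 1" shows "paths N \<pi> P t \<noteq> {}"
proof -
  define nx where "nx i = (SOME j. j \<in> V \<and> P i j > 0)" for i
  have nx: "nx i \<in> V" "P i (nx i) > 0" if "i \<in> V" for i
    using someI_ex[OF exists_successor[OF that, unfolded Bex_def]] unfolding nx_def by auto
  define q where "q k = (nx ^^ k) 1" for k
  have qV: "q k \<in> V" for k
  proof (induction k)
    case 0 then show ?case using N1 unfolding q_def by simp
  next
    case (Suc k) then show ?case using nx(1)[of "q k"] unfolding q_def by simp
  qed
  have qS: "q (Suc k) = nx (q k)" for k unfolding q_def by simp
  define s where "s = map q [0..<t]"
  have sn: "k < t \<Longrightarrow> s ! k = q k" for k unfolding s_def by simp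
  have "path_prob \<pi> P s = \<pi> (q 0) * (\<Prod>k<t - 1. P (q k) (q (Suc k)))"
    unfolding path_prob_def s_def using assms by (intro arg_cong2[where f="(*)"] prod.cong) auto
  also have "\<dots> > 0" using pi_pos[OF qV] nx[OF qV] qS by (intro mult_pos_pos prod_pos) auto
  finally have "s \<in> paths N \<pi> P t" unfolding paths_def s_def using qV by auto
  then show ?thesis by auto
qed

definition count_matrices :: "nat \<Rightarrow> (nat \<Rightarrow> nat \<Rightarrow> nat) set" where
  "count_matrices B = {m. \<forall>i j. m i j \<le> B \<and> ((i,j) \<notin> V \<times> V \<longrightarrow> m i j = 0)}"

lemma finite_card_count_matrices:
  shows "finite (count_matrices B)" and "card (count_matrices B) \<le> (B + 1) ^ (N * N)"
proof -
  define r where "r m = restrict (\<lambda>(i,j). m i j) (V \<times> V)" for m :: "nat \<Rightarrow> nat \<Rightarrow> nat"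
  have inj: "inj_on r (count_matrices B)"
  proof (rule inj_onI)
    fix m m' assume m: "m \<in> count_matrices B" "m' \<in> count_matrices B" "r m = r m'"
    show "m = m'"
    proof (intro ext)
      fix i j
      show "m i j = m' i j"
      proof (cases "(i,j) \<in> V \<times> V")
        case True
        then show ?thesis using fun_cong[OF m(3), of "(i,j)"] unfolding r_def by simp
      next
        case False
        then show ?thesis using m(1,2) unfolding count_matrices_def by auto
      qed
    qed
  qed
  have sub: "r ` count_matrices B \<subseteq> PiE (V \<times> V) (\<lambda>_. {0..B})"
  proof
    fix x assume "x \<in> r ` count_matrices B"
    then obtain m where m: "m \<in> count_matrices B" "x = r m" by blast
    have "\<forall>q\<in>V \<times> V. (\<lambda>(i,j). m i j) q \<in> {0..B}" using m(1) unfolding count_matrices_def by auto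
    then show "x \<in> PiE (V \<times> V) (\<lambda>_. {0..B})" unfolding m(2) r_def by (subst restrict_PiE_iff) simp
  qed
  have fin: "finite (PiE (V \<times> V) (\<lambda>_. {0..B}))" by (intro finite_PiE) auto
  show "finite (count_matrices B)" using inj_on_finite[OF inj sub fin] .
  have "card (count_matrices B) \<le> card (PiE (V \<times> V) (\<lambda>_. {0..B}))"
    using card_inj_on_le[OF inj sub fin] .
  also have "\<dots> = (B + 1) ^ (N * N)" by (simp add: card_PiE card_cartesian_product)
  finally show "card (count_matrices B) \<le> (B + 1) ^ (N * N)" .
qed

lemma edge_count_in_count_matrices:
  assumes "s \<in> paths N \<pi> P t" "t \<ge> 1"
  shows "edge_count s \<in> count_matrices (t + max_return_len)"
proof -
  have w: "is_walk s" using is_walk_path assms by blast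
  have "edge_count s i j \<le> t + max_return_len" for i j
  proof -
    have "edge_count s i j \<le> cycle_len s"
      unfolding edge_count_def cycle_len_def by (rule count_le_length)
    also have "\<dots> \<le> t + max_return_len"
      using cycle_len_bounds(2)[OF w] assms(1) unfolding paths_def by simp
    finally show ?thesis .
  qed
  moreover have "edge_count s i j = 0" if "(i,j) \<notin> V \<times> V" for i j
    using that walk_edges_subset[OF close_walk_props(1)[OF w]] count_notin[of "(i,j)" "cycle_edges s"]
    unfolding edge_count_def by blast
  ultimately show ?thesis unfolding count_matrices_def by blast
qed

definition emp_flows :: "nat \<Rightarrow> (nat \<Rightarrow> nat \<Rightarrow> real) set" where
  "emp_flows t = emp_flow ` paths N \<pi> P t"

lemma card_emp_flows:
  assumes "t \<ge> 1"
  shows "finite (emp_flows t)"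
    and "real (card (emp_flows t)) \<le> (real t + real max_return_len + 1) ^ (N * N + 1)"
proof -
  let ?B = "t + max_return_len"
  define F :: "(nat \<Rightarrow> nat \<Rightarrow> nat) \<times> nat \<Rightarrow> nat \<Rightarrow> nat \<Rightarrow> real"
    where "F = (\<lambda>(m, T) i j. real (m i j) / real T)"
  have sub: "emp_flows t \<subseteq> F ` (count_matrices ?B \<times> {0..?B})"
  proof
    fix f assume "f \<in> emp_flows t"
    then obtain s where s: "s \<in> paths N \<pi> P t" "f = emp_flow s" unfolding emp_flows_def by blast
    have "cycle_len s \<le> ?B" using cycle_len_bounds(2)[OF is_walk_path[OF s(1) assms]] s(1)
      unfolding paths_def by simp
    moreover have "f = F (edge_count s, cycle_len s)" unfolding s(2) F_def emp_flow_def[abs_def]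
      by simp
    ultimately show "f \<in> F ` (count_matrices ?B \<times> {0..?B})"
      using edge_count_in_count_matrices[OF s(1) assms] by force
  qed
  have fin: "finite (count_matrices ?B \<times> {0..?B})" using finite_card_count_matrices by auto
  show "finite (emp_flows t)" using finite_subset[OF sub] fin by auto
  have "card (emp_flows t) \<le> card (F ` (count_matrices ?B \<times> {0..?B}))" using sub fin
    by (intro card_mono) auto
  also have "\<dots> \<le> card (count_matrices ?B \<times> {0..?B})" using fin by (rule card_image_le)
  also have "\<dots> = card (count_matrices ?B) * (?B + 1)" by (simp add: card_cartesian_product)
  also have "\<dots> \<le> (?B + 1) ^ (N * N) * (?B + 1)" using finite_card_count_matrices
    by (intro mult_right_mono) auto
  finally have "card (emp_flows t) \<le> (?B + 1) ^ (N * N + 1)" by (simp add: mult.commute)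
  then have "real (card (emp_flows t)) \<le> real ((?B + 1) ^ (N * N + 1))" by linarith
  then show "real (card (emp_flows t)) \<le> (real t + real max_return_len + 1) ^ (N * N + 1)"
    by (simp only: of_nat_power of_nat_add of_nat_1)
qed


lemma sum_flow_walk_prob_paths_le:
  assumes "\<theta> \<in> Delta N P" "C \<subseteq> paths N \<pi> P t" "t \<ge> 1"
  shows "(\<Sum>s\<in>C. flow_walk_prob \<theta> s) \<le> real N"
proof -
  have "(\<Sum>s\<in>C. flow_walk_prob \<theta> s) \<le> (\<Sum>s\<in>words t V. flow_walk_prob \<theta> s)"
  proof (rule sum_mono2)
    show "finite (words t V)" by (rule finite_words) simp
    show "C \<subseteq> words t V" using assms(2) paths_subset_words by blast
    show "\<And>s. s \<in> words t V - C \<Longrightarrow> 0 \<le> flow_walk_prob \<theta> s"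
      using flow_walk_prob_bounds(1)[OF assms(1)] unfolding words_def by auto
  qed
  also have "\<dots> \<le> real N"
    using sum_words_flow_walk_prob_le[OF assms(1), of "t - 1"] assms(3) by (simp add: Suc_diff_1)
  finally show ?thesis .
qed

lemma cycle_len_path_pos: assumes "s \<in> paths N \<pi> P t" "t \<ge> 2" shows "cycle_len s > 0"
proof -
  have "length s = t" using assms(1) unfolding paths_def by simp
  then show ?thesis using cycle_len_bounds(1)[OF is_walk_path[OF assms(1)]] assms(2) by simp
qed

lemma emp_flows_Delta: assumes "\<theta> \<in> emp_flows t" "t \<ge> 2" shows "\<theta> \<in> Delta N P"
  using assms emp_flow_Delta is_walk_path cycle_len_path_pos unfolding emp_flows_def by force

end

section \<open>Gaussian moments of the likelihood terms\<close>

lemma std_normal_density_mult_exp: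
  fixes a b x :: real
  shows "std_normal_density x * exp (a * x - b) = exp (a\<^sup>2 / 2 - b) * normal_density a 1 x"
proof -
  have "exp (- x\<^sup>2 / 2) * exp (a * x - b) = exp (a\<^sup>2 / 2 - b) * exp (- (x - a)\<^sup>2 / 2)"
  proof -
    have "- x\<^sup>2 / 2 + (a * x - b) = a\<^sup>2 / 2 - b + (- (x - a)\<^sup>2 / 2)"
      by (simp add: power2_eq_square field_simps)
    then show ?thesis by (simp add: exp_add[symmetric])
  qed
  then show ?thesis unfolding normal_density_def by (simp add: algebra_simps)
qed

lemma (in prob_space) std_normal_exp_affine:
  fixes Z :: "'a \<Rightarrow> real"
  assumes D: "distributed M lborel Z std_normal_density"
  shows "integrable M (\<lambda>\<omega>. exp (a * Z \<omega> - b))" "(\<integral>\<omega>. exp (a * Z \<omega> - b) \<partial>M) = exp (a\<^sup>2 / 2 - b)"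
proof -
  have m: "(\<lambda>x. exp (a * x - b)) \<in> borel_measurable lborel" by measurable
  have "integrable lborel (\<lambda>x. std_normal_density x * exp (a * x - b))"
    unfolding std_normal_density_mult_exp by simp
  then show "integrable M (\<lambda>\<omega>. exp (a * Z \<omega> - b))"
    using distributed_integrable[OF D m] by simp
  have "(\<integral>x. std_normal_density x * exp (a * x - b) \<partial>lborel) = exp (a\<^sup>2 / 2 - b)"
    unfolding std_normal_density_mult_exp by simp
  then show "(\<integral>\<omega>. exp (a * Z \<omega> - b) \<partial>M) = exp (a\<^sup>2 / 2 - b)"
    using distributed_integral[OF D m] by simp
qed

locale gaussian_model = finite_chain N P \<pi> \<beta> + prob_space M
  for N P \<pi> \<beta> and M :: "'a measure" +
  fixes X :: "nat \<Rightarrow> nat \<Rightarrow> 'a \<Rightarrow> real"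
  assumes indep: "indep_vars (\<lambda>_. borel) (\<lambda>(i, k). X i k) ({1..N} \<times> {1..})"
    and distr: "\<And>i k. i \<in> {1..N} \<Longrightarrow> k \<ge> 1 \<Longrightarrow> distributed M lborel (X i k) std_normal_density"
begin

lemma X_measurable: "i \<in> V \<Longrightarrow> k \<ge> 1 \<Longrightarrow> X i k \<in> borel_measurable M"
  using distributed_measurable[OF distr] by simp

lemma integral_prod_exp_path:
  fixes c d :: "nat \<Rightarrow> real"
  assumes sV: "set s \<subseteq> V"
  shows "integrable M (\<lambda>\<omega>. \<Prod>k<length s. exp (c (s!k) * X (s!k) (Suc k) \<omega> - d (s!k)))"
    "(\<integral>\<omega>. (\<Prod>k<length s. exp (c (s!k) * X (s!k) (Suc k) \<omega> - d (s!k))) \<partial>M)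
       = (\<Prod>k<length s. exp ((c (s!k))\<^sup>2 / 2 - d (s!k)))"
proof -
  define g where "g k = (s!k, Suc k)" for k
  define I where "I = g ` {..<length s}"
  define Z where "Z q \<omega> = exp (c (fst q) * (case q of (i,k) \<Rightarrow> X i k) \<omega> - d (fst q))" for q \<omega>
  have inj: "inj_on g {..<length s}" unfolding g_def inj_on_def by auto
  have IV: "I \<subseteq> V \<times> {1..}" unfolding I_def g_def using sV by (auto simp: nth_mem subsetD)
  have ind0: "indep_vars (\<lambda>_. borel)
      (\<lambda>q \<omega>. (\<lambda>x. exp (c (fst q) * x - d (fst q))) ((\<lambda>(i, k). X i k) q \<omega>)) (V \<times> {1..})"
    by (rule indep_vars_compose2[OF indep]) measurable
  have ind: "indep_vars (\<lambda>_. borel) Z I"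
    using indep_vars_subset[OF ind0 IV] unfolding Z_def by (simp add: case_prod_beta)
  have intZ: "integrable M (Z q)" and eZ: "(\<integral>\<omega>. Z q \<omega> \<partial>M) = exp ((c (fst q))\<^sup>2 / 2 - d (fst q))"
    if "q \<in> I" for q
  proof -
    obtain i k where q0: "q = (i,k)" by (cases q)
    then have "(i,k) \<in> V \<times> {1..}" using that IV by blast
    then have q: "q = (i,k)" "i \<in> V" "k \<ge> 1" using q0 by auto
    have "Z q = (\<lambda>\<omega>. exp (c i * X i k \<omega> - d i))" unfolding Z_def q by simp
    then show "integrable M (Z q)" "(\<integral>\<omega>. Z q \<omega> \<partial>M) = exp ((c (fst q))\<^sup>2 / 2 - d (fst q))"
      using std_normal_exp_affine[OF distr[OF q(2,3)], of "c i" "d i"] q by simp_all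
  qed
  have fin: "finite I" unfolding I_def by simp
  have re: "(\<Prod>k<length s. exp (c (s!k) * X (s!k) (Suc k) \<omega> - d (s!k))) = (\<Prod>q\<in>I. Z q \<omega>)" for \<omega>
    unfolding I_def by (subst prod.reindex[OF inj]) (simp add: Z_def g_def)
  show "integrable M (\<lambda>\<omega>. \<Prod>k<length s. exp (c (s!k) * X (s!k) (Suc k) \<omega> - d (s!k)))"
    unfolding re using indep_vars_integrable[OF fin ind intZ] by simp
  have "(\<integral>\<omega>. (\<Prod>q\<in>I. Z q \<omega>) \<partial>M) = (\<Prod>q\<in>I. \<integral>\<omega>. Z q \<omega> \<partial>M)"
    using indep_vars_lebesgue_integral[OF fin ind intZ] by simp
  also have "\<dots> = (\<Prod>q\<in>I. exp ((c (fst q))\<^sup>2 / 2 - d (fst q)))" using eZ by (intro prod.cong) auto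
  also have "\<dots> = (\<Prod>k<length s. exp ((c (s!k))\<^sup>2 / 2 - d (s!k)))"
    unfolding I_def by (subst prod.reindex[OF inj]) (simp add: g_def)
  finally show "(\<integral>\<omega>. (\<Prod>k<length s. exp (c (s!k) * X (s!k) (Suc k) \<omega> - d (s!k))) \<partial>M)
       = (\<Prod>k<length s. exp ((c (s!k))\<^sup>2 / 2 - d (s!k)))" unfolding re .
qed

definition path_term :: "nat list \<Rightarrow> 'a \<Rightarrow> real" where
  "path_term s \<omega> = path_prob \<pi> P s * exp (\<Sum>k<length s. \<beta> (s!k) * X (s!k) (k+1) \<omega> - (\<beta> (s!k))\<^sup>2 / 2)"

lemma lik_eq_sum_path_term: "lik N \<pi> P \<beta> t (\<lambda>i k. X i k \<omega>) = (\<Sum>s\<in>paths N \<pi> P t. path_term s \<omega>)"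
  unfolding lik_def path_term_def by (intro sum.cong refl) (simp add: paths_def)

definition path_moment :: "real \<Rightarrow> nat list \<Rightarrow> real" where
  "path_moment p s = path_prob \<pi> P s powr p
     * (\<Prod>k<length s. exp ((p * \<beta> (s!k))\<^sup>2 / 2 - p * (\<beta> (s!k))\<^sup>2 / 2))"

definition path_term_powr :: "real \<Rightarrow> nat list \<Rightarrow> 'a \<Rightarrow> real" where
  "path_term_powr p s \<omega> = path_prob \<pi> P s powr p
     * (\<Prod>k<length s. exp ((p * \<beta> (s!k)) * X (s!k) (Suc k) \<omega> - p * (\<beta> (s!k))\<^sup>2 / 2))"

lemma path_term_pos: "path_prob \<pi> P s > 0 \<Longrightarrow> path_term s \<omega> > 0"
  unfolding path_term_def by simp

lemma path_term_powr_eq: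
  assumes "path_prob \<pi> P s > 0" shows "path_term s \<omega> powr p = path_term_powr p s \<omega>"
proof -
  have "path_term s \<omega> powr p = path_prob \<pi> P s powr p
      * exp ((\<Sum>k<length s. \<beta> (s!k) * X (s!k) (k+1) \<omega> - (\<beta> (s!k))\<^sup>2 / 2) * p)"
    unfolding path_term_def by (simp add: powr_mult exp_powr_real)
  also have "(\<Sum>k<length s. \<beta> (s!k) * X (s!k) (k+1) \<omega> - (\<beta> (s!k))\<^sup>2 / 2) * p
     = (\<Sum>k<length s. (p * \<beta> (s!k)) * X (s!k) (Suc k) \<omega> - p * (\<beta> (s!k))\<^sup>2 / 2)"
    by (simp add: sum_distrib_right) (intro sum.cong refl, simp add: algebra_simps)
  finally show ?thesis unfolding path_term_powr_def by (simp add: exp_sum)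
qed

lemma integral_path_term_powr: assumes "set s \<subseteq> V"
  shows "integrable M (path_term_powr p s)" "(\<integral>\<omega>. path_term_powr p s \<omega> \<partial>M) = path_moment p s"
proof -
  note pg = integral_prod_exp_path[OF assms, of "\<lambda>i. p * \<beta> i" "\<lambda>i. p * (\<beta> i)\<^sup>2 / 2"]
  show "integrable M (path_term_powr p s)" unfolding path_term_powr_def[abs_def] using pg(1) by simp
  show "(\<integral>\<omega>. path_term_powr p s \<omega> \<partial>M) = path_moment p s"
    unfolding path_term_powr_def path_moment_def using pg(2) by simp
qed

lemma path_term_powr_nonneg: "path_term_powr p s \<omega> \<ge> 0"
  unfolding path_term_powr_def by (intro mult_nonneg_nonneg prod_nonneg) auto

lemma path_term_measurable: assumes "set s \<subseteq> V" shows "path_term s \<in> borel_measurable M"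
proof -
  have Xk: "(\<lambda>\<omega>. X (s!k) (k+1) \<omega>) \<in> borel_measurable M" if "k < length s" for k
    using X_measurable[of "s!k" "k+1"] assms that nth_mem by fastforce
  have h1: "(\<lambda>\<omega>. \<Sum>k<length s. \<beta> (s!k) * X (s!k) (k+1) \<omega> - (\<beta> (s!k))\<^sup>2 / 2) \<in> borel_measurable M"
    by (rule borel_measurable_sum)
      (intro borel_measurable_diff borel_measurable_times borel_measurable_const Xk, auto)
  have h2: "(\<lambda>\<omega>. exp (\<Sum>k<length s. \<beta> (s!k) * X (s!k) (k+1) \<omega> - (\<beta> (s!k))\<^sup>2 / 2))
      \<in> borel_measurable M"
    using measurable_compose[OF h1 borel_measurable_exp] by simp
  show ?thesis unfolding path_term_def[abs_def]
    by (intro borel_measurable_times borel_measurable_const h2)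
qed

lemma sum_path_term_measurable:
  assumes "C \<subseteq> paths N \<pi> P t" shows "(\<lambda>\<omega>. \<Sum>s\<in>C. path_term s \<omega>) \<in> borel_measurable M"
  by (rule borel_measurable_sum) (use assms path_term_measurable in \<open>auto simp: paths_def\<close>)

text \<open>Markov's inequality for the \<open>p\<close>-th power, which is subadditive for \<open>p \<le> 1\<close>.\<close>

lemma prob_sum_path_term_ge:
  assumes C: "finite C" "C \<subseteq> paths N \<pi> P t" and a: "a > 0" and p: "0 < p" "p \<le> 1"
  shows "measure M {\<omega>\<in>space M. a \<le> (\<Sum>s\<in>C. path_term s \<omega>)} \<le> (\<Sum>s\<in>C. path_moment p s) / a powr p"
proof -
  have sC: "set s \<subseteq> V" "path_prob \<pi> P s > 0" if "s \<in> C" for s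
    using that C unfolding paths_def by auto
  define u where "u \<omega> = (\<Sum>s\<in>C. path_term_powr p s \<omega>)" for \<omega>
  have ui: "integrable M u" unfolding u_def
  proof (rule Bochner_Integration.integrable_sum)
    fix s assume "s \<in> C" then show "integrable M (path_term_powr p s)"
      using integral_path_term_powr(1)[OF sC(1)] by blast
  qed
  have um: "u \<in> borel_measurable M" using ui by (rule borel_measurable_integrable)
  have ue: "(\<integral>\<omega>. u \<omega> \<partial>M) = (\<Sum>s\<in>C. path_moment p s)"
    unfolding u_def using integral_path_term_powr[OF sC(1)]
    by (subst Bochner_Integration.integral_sum) auto
  have sub: "{\<omega>\<in>space M. a \<le> (\<Sum>s\<in>C. path_term s \<omega>)} \<subseteq> {\<omega>\<in>space M. a powr p \<le> u \<omega>}"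
  proof safe
    fix \<omega> assume \<omega>: "\<omega> \<in> space M" "a \<le> (\<Sum>s\<in>C. path_term s \<omega>)"
    have "a powr p \<le> (\<Sum>s\<in>C. path_term s \<omega>) powr p" using \<omega> a p by (intro powr_mono2) auto
    also have "\<dots> \<le> (\<Sum>s\<in>C. path_term s \<omega> powr p)"
      using C(1) p path_term_pos[OF sC(2)] by (intro powr_sum_le) (auto intro: less_imp_le)
    also have "\<dots> = u \<omega>" unfolding u_def using path_term_powr_eq[OF sC(2)] by (intro sum.cong) auto
    finally show "a powr p \<le> u \<omega>" .
  qed
  have "measure M {\<omega>\<in>space M. a \<le> (\<Sum>s\<in>C. path_term s \<omega>)} \<le> measure M {\<omega>\<in>space M. a powr p \<le> u \<omega>}"
    using sub um by (intro finite_measure_mono) auto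
  also have "\<dots> \<le> (\<integral>\<omega>. u \<omega> \<partial>M) / a powr p"
    by (rule integral_Markov_inequality_measure[OF ui, of "space M"])
      (use a in \<open>auto simp: u_def intro!: sum_nonneg path_term_powr_nonneg\<close>)
  finally show ?thesis unfolding ue .
qed

end

section \<open>The large-deviation bound\<close>

locale tilted_bound = gaussian_model N P \<pi> \<beta> M X
  for N P \<pi> \<beta> and M :: "'a measure" and X +
  fixes z p0 \<delta> :: real
  assumes below_objective:
    "\<And>\<theta> \<xi>. \<theta> \<in> Delta N P \<Longrightarrow> Jfun N \<theta> \<xi> \<le> ereal (entr N \<theta>) \<Longrightarrow> z \<le> objective N P \<beta> \<theta> \<xi>"
    and p0: "0 < p0" "p0 \<le> 1" and dl: "\<delta> > 0"
begin

definition tilt :: "(nat \<Rightarrow> nat \<Rightarrow> real) \<Rightarrow> real" where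
  "tilt \<theta> = (SOME p. p0 \<le> p \<and> p \<le> 1 \<and> p * (z - 2 * p0 * beta_sq_sum N \<beta>) \<le>
     p*(kl_div N \<theta> P + entr N \<theta>) + p*(1-p)* signal_energy N \<beta> \<theta> - entr N \<theta>)"

lemma tilt_props:
  assumes "\<theta> \<in> Delta N P"
  shows "p0 \<le> tilt \<theta>" "tilt \<theta> \<le> 1"
    "tilt \<theta> * (z - 2 * p0 * beta_sq_sum N \<beta>) \<le> tilt \<theta> * (kl_div N \<theta> P + entr N \<theta>)
       + tilt \<theta> * (1 - tilt \<theta>) * signal_energy N \<beta> \<theta> - entr N \<theta>"
  using someI_ex[OF exists_tilt_exponent_Delta[OF assms below_objective p0]] unfolding tilt_def by blast+

definition rate :: real where "rate = z - 2 * p0 * beta_sq_sum N \<beta> - \<delta>"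

definition path_const :: real where
  "path_const = (1 + 1 / min_return_prob) *
     exp (real max_return_len * beta_sq_sum N \<beta> + (real max_return_len + 1) * \<bar>rate\<bar>)"

lemma path_const_pos: "path_const > 0"
  unfolding path_const_def using min_return_prob_pos by (simp add: add_pos_pos)

lemma path_moment_le:
  assumes s: "s \<in> paths N \<pi> P t" and t: "t \<ge> 2"
  shows "path_moment (tilt (emp_flow s)) s * exp (tilt (emp_flow s) * real t * rate)
    \<le> path_const * exp (- p0 * \<delta> * (real t - 1)) * flow_walk_prob (emp_flow s) s"
proof -
  have w: "is_walk s" using is_walk_path[OF s] t by simp
  have T0: "cycle_len s > 0" by (rule cycle_len_path_pos[OF s t])
  have len: "length s = t" using s unfolding paths_def by simp
  note Tb = cycle_len_bounds[OF w]
  let ?f = "emp_flow s" let ?p = "tilt ?f" let ?T = "real (cycle_len s)"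
  let ?H = "entr N ?f" let ?D = "kl_div N ?f P" let ?B = "signal_energy N \<beta> ?f"
  note tilt = tilt_props[OF emp_flow_Delta[OF w T0]]
  have p: "0 \<le> ?p" "?p \<le> 1" using tilt p0 by auto
  have ppos: "path_prob \<pi> P s > 0" using s unfolding paths_def by simp
  have "?p * rate \<le> ?p * (?D + ?H) + ?p * (1 - ?p) * ?B - ?H - p0 * \<delta>"
  proof -
    have "?p * rate = ?p * (z - 2 * p0 * beta_sq_sum N \<beta>) - ?p * \<delta>"
      unfolding rate_def by (simp add: algebra_simps)
    moreover have "p0 * \<delta> \<le> ?p * \<delta>" using tilt(1) dl by (intro mult_right_mono) auto
    ultimately show ?thesis using tilt(3) by linarith
  qed
  then have "?T * (?p * rate) \<le> ?T * (?p * (?D + ?H) + ?p * (1 - ?p) * ?B - ?H - p0 * \<delta>)"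
    by (intro mult_left_mono) auto
  moreover have "p0 * \<delta> * (real t - 1) \<le> p0 * \<delta> * ?T"
    using Tb len p0 dl by (intro mult_left_mono) auto
  ultimately have exponent: "- ?p * ?T * (?D + ?H) + (- ?p * (1 - ?p) * ?T * ?B) + ?p * ?T * rate
      \<le> - ?T * ?H - p0 * \<delta> * (real t - 1)"
    by (simp add: algebra_simps)
  have "?p * real t * rate \<le> ?p * ?T * rate + (real max_return_len + 1) * \<bar>rate\<bar>"
    using Tb len p by (intro mult_le_mult_plus_abs) auto
  then have "path_moment ?p s * exp (?p * real t * rate)
      \<le> ((1 + 1 / min_return_prob) * exp (- ?p * ?T * (?D + ?H)))
        * exp (- ?p * (1 - ?p) * ?T * ?B + max_return_len * beta_sq_sum N \<beta>)
        * exp (?p * ?T * rate + (real max_return_len + 1) * \<bar>rate\<bar>)"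
    unfolding path_moment_def
    using path_prob_powr_le[OF w T0 ppos p] prod_exp_beta_le[OF w T0 p] min_return_prob_pos
    by (intro mult_mono) (auto intro!: prod_nonneg mult_nonneg_nonneg add_nonneg_nonneg)
  also have "\<dots>
      = path_const * exp (- ?p * ?T * (?D + ?H) + (- ?p * (1 - ?p) * ?T * ?B) + ?p * ?T * rate)"
    unfolding path_const_def by (simp add: exp_add[symmetric] algebra_simps)
  also have "\<dots> \<le> path_const * (exp (- p0 * \<delta> * (real t - 1)) * exp (- ?T * ?H))"
    using exponent path_const_pos by (simp add: exp_add[symmetric] algebra_simps)
  also have "\<dots> \<le> path_const * exp (- p0 * \<delta> * (real t - 1)) * flow_walk_prob ?f s"
    using flow_walk_prob_ge[OF w T0] path_const_pos by (simp add: mult.assoc)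
  finally show ?thesis .
qed

definition flow_class :: "nat \<Rightarrow> (nat \<Rightarrow> nat \<Rightarrow> real) \<Rightarrow> nat list set" where
  "flow_class t \<theta> = {s \<in> paths N \<pi> P t. emp_flow s = \<theta>}"

definition threshold :: "nat \<Rightarrow> real" where "threshold t = exp (- real t * rate)"

definition large_lik_event :: "nat \<Rightarrow> 'a set" where
  "large_lik_event t =
     {\<omega>\<in>space M. real (card (emp_flows t)) * threshold t < (\<Sum>s\<in>paths N \<pi> P t. path_term s \<omega>)}"

lemma prob_flow_class_ge:
  assumes t: "t \<ge> 2" and \<theta>: "\<theta> \<in> emp_flows t"
  shows "measure M {\<omega>\<in>space M. threshold t \<le> (\<Sum>s\<in>flow_class t \<theta>. path_term s \<omega>)}
    \<le> path_const * exp (- p0 * \<delta> * (real t - 1)) * real N"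
proof -
  have D: "\<theta> \<in> Delta N P" by (rule emp_flows_Delta[OF \<theta> t])
  let ?p = "tilt \<theta>" and ?C = "flow_class t \<theta>"
  have p: "0 < ?p" "?p \<le> 1" using tilt_props[OF D] p0 by auto
  have C: "finite ?C" "?C \<subseteq> paths N \<pi> P t" using finite_paths unfolding flow_class_def by auto
  have "measure M {\<omega>\<in>space M. threshold t \<le> (\<Sum>s\<in>?C. path_term s \<omega>)}
      \<le> (\<Sum>s\<in>?C. path_moment ?p s) / threshold t powr ?p"
    by (rule prob_sum_path_term_ge[OF C _ p]) (simp add: threshold_def)
  also have "\<dots> = (\<Sum>s\<in>?C. path_moment ?p s * exp (?p * real t * rate))"
  proof -
    have "threshold t powr ?p = exp (- (?p * real t * rate))"
      unfolding threshold_def by (simp add: exp_powr_real algebra_simps)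
    then show ?thesis by (simp add: exp_minus divide_inverse sum_distrib_right)
  qed
  also have "\<dots> \<le> (\<Sum>s\<in>?C. path_const * exp (- p0 * \<delta> * (real t - 1)) * flow_walk_prob \<theta> s)"
    using path_moment_le t unfolding flow_class_def by (intro sum_mono) auto
  also have "\<dots> = path_const * exp (- p0 * \<delta> * (real t - 1)) * (\<Sum>s\<in>?C. flow_walk_prob \<theta> s)"
    by (simp add: sum_distrib_left)
  also have "\<dots> \<le> path_const * exp (- p0 * \<delta> * (real t - 1)) * real N"
    using sum_flow_walk_prob_paths_le[OF D C(2)] t path_const_pos by (intro mult_left_mono) auto
  finally show ?thesis .
qed

lemma large_lik_event_sets: "large_lik_event t \<in> sets M"
proof -
  have "(\<lambda>\<omega>. \<Sum>s\<in>paths N \<pi> P t. path_term s \<omega>) \<in> borel_measurable M"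
    by (rule sum_path_term_measurable[of _ t]) simp
  then show ?thesis unfolding large_lik_event_def by measurable
qed

lemma prob_large_lik_event_le: assumes t: "t \<ge> 2"
  shows "measure M (large_lik_event t)
    \<le> real (card (emp_flows t)) * (path_const * exp (- p0 * \<delta> * (real t - 1)) * real N)"
proof -
  define cs where "cs \<theta> = {\<omega>\<in>space M. threshold t \<le> (\<Sum>s\<in>flow_class t \<theta>. path_term s \<omega>)}" for \<theta>
  have finTh: "finite (emp_flows t)" using card_emp_flows t by simp
  have neTh: "emp_flows t \<noteq> {}" using paths_nonempty[of t] t unfolding emp_flows_def by auto
  have grp: "(\<Sum>s\<in>paths N \<pi> P t. path_term s \<omega>)
      = (\<Sum>\<theta>\<in>emp_flows t. \<Sum>s\<in>flow_class t \<theta>. path_term s \<omega>)" for \<omega>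
    unfolding flow_class_def emp_flows_def
      by (rule sum.group[symmetric]) (auto simp: finite_paths emp_flows_def[symmetric] finTh)
  have sub: "large_lik_event t \<subseteq> (\<Union>\<theta>\<in>emp_flows t. cs \<theta>)"
  proof
    fix \<omega> assume \<omega>: "\<omega> \<in> large_lik_event t"
    show "\<omega> \<in> (\<Union>\<theta>\<in>emp_flows t. cs \<theta>)"
    proof (rule ccontr)
      assume "\<omega> \<notin> (\<Union>\<theta>\<in>emp_flows t. cs \<theta>)"
      then have lt: "(\<Sum>s\<in>flow_class t \<theta>. path_term s \<omega>) < threshold t" if "\<theta> \<in> emp_flows t" for \<theta>
        using \<omega> that unfolding cs_def large_lik_event_def by auto
      have "(\<Sum>\<theta>\<in>emp_flows t. \<Sum>s\<in>flow_class t \<theta>. path_term s \<omega>) < (\<Sum>\<theta>\<in>emp_flows t. threshold t)"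
        using finTh neTh lt by (intro sum_strict_mono) auto
      then show False using \<omega> unfolding large_lik_event_def grp by simp
    qed
  qed
  have csm: "cs \<theta> \<in> sets M" for \<theta>
  proof -
    have "(\<lambda>\<omega>. \<Sum>s\<in>flow_class t \<theta>. path_term s \<omega>) \<in> borel_measurable M"
      by (rule sum_path_term_measurable) (auto simp: flow_class_def)
    then show ?thesis unfolding cs_def by measurable
  qed
  have "measure M (large_lik_event t) \<le> measure M (\<Union>\<theta>\<in>emp_flows t. cs \<theta>)"
    using sub csm finTh by (intro finite_measure_mono) auto
  also have "\<dots> \<le> (\<Sum>\<theta>\<in>emp_flows t. measure M (cs \<theta>))" using finTh csm
    by (intro measure_UNION_le) auto
  also have "\<dots> \<le> (\<Sum>\<theta>\<in>emp_flows t. path_const * exp (- p0 * \<delta> * (real t - 1)) * real N)"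
    unfolding cs_def using prob_flow_class_ge[OF t] by (intro sum_mono) auto
  finally show ?thesis by simp
qed

definition eta :: real where "eta = p0 * \<delta> / 2"

text \<open>Absorbs the polynomial number of types into \<open>exp (eta * t)\<close>.\<close>

definition count_const :: real where "count_const = (real (N*N+1) / eta) ^ (N*N+1)"

lemma eta_pos: "eta > 0" unfolding eta_def using p0 dl by simp

lemma count_const_pos: "count_const > 0"
proof -
  have "real (N*N+1) > 0" by (simp only: of_nat_0_less_iff)
  then show ?thesis unfolding count_const_def using eta_pos
    by (intro zero_less_power divide_pos_pos)
qed

lemma card_emp_flows_le_exp: assumes "t \<ge> 1"
  shows "real (card (emp_flows t)) \<le> count_const * exp (eta * (real t + real max_return_len + 1))"
  using card_emp_flows(2)[OF assms] power_le_exp_mult[of "real t + real max_return_len + 1" eta "N*N+1"]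
    eta_pos
  unfolding count_const_def by linarith

lemma summable_prob_large_lik_event: "summable (\<lambda>t. measure M (large_lik_event t))"
proof -
  define Cs where
    "Cs = count_const * path_const * real N * exp (eta * (real max_return_len + 1) + p0 * \<delta>)"
  have b: "norm (measure M (large_lik_event t)) \<le> Cs * exp (- eta) ^ t" if "t \<ge> 2" for t
  proof -
    have "measure M (large_lik_event t)
        \<le> real (card (emp_flows t)) * (path_const * exp (- p0 * \<delta> * (real t - 1)) * real N)"
      by (rule prob_large_lik_event_le[OF that])
    also have "\<dots> \<le> count_const * exp (eta * (real t + real max_return_len + 1))
        * (path_const * exp (- p0 * \<delta> * (real t - 1)) * real N)"
      using card_emp_flows_le_exp[of t] that path_const_pos by (intro mult_right_mono) auto
    also have "\<dots> = Cs * exp (- eta * real t)"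
      unfolding Cs_def by (simp add: exp_add[symmetric] eta_def field_simps)
    also have "\<dots> = Cs * exp (- eta) ^ t" by (simp add: exp_of_nat_mult[symmetric] mult.commute)
    finally show ?thesis by simp
  qed
  have "summable (\<lambda>t. Cs * exp (- eta) ^ t)" using eta_pos
    by (intro summable_mult summable_geometric) simp
  then show ?thesis using b by (rule summable_comparison_test')
qed

lemma AE_eventually_not_large_lik:
  "AE \<omega> in M. eventually (\<lambda>t. \<omega> \<in> space M - large_lik_event t) sequentially"
  by (rule borel_cantelli_AE1[OF large_lik_event_sets])
    (auto simp: summable_prob_large_lik_event emeasure_eq_measure)

lemma neg_ln_lik_ge:
  assumes t: "t \<ge> 2" and \<omega>: "\<omega> \<in> space M - large_lik_event t"
  shows "rate - eta - (ln count_const + eta * (real max_return_len + 1)) / real t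
    \<le> - (1 / real t) * ln (lik N \<pi> P \<beta> t (\<lambda>i k. X i k \<omega>))"
proof -
  let ?L = "lik N \<pi> P \<beta> t (\<lambda>i k. X i k \<omega>)"
  let ?E = "ln count_const + eta * (real t + real max_return_len + 1) - real t * rate"
  have pos: "?L > 0"
    unfolding lik_eq_sum_path_term using finite_paths paths_nonempty[of t] t path_term_pos
    unfolding paths_def by (intro sum_pos) auto
  have "?L \<le> real (card (emp_flows t)) * threshold t"
    using \<omega> unfolding large_lik_event_def lik_eq_sum_path_term by auto
  also have "\<dots> \<le> count_const * exp (eta * (real t + real max_return_len + 1)) * threshold t"
    using card_emp_flows_le_exp[of t] t by (intro mult_right_mono) (auto simp: threshold_def)
  also have "\<dots> = exp ?E"
    using count_const_pos unfolding threshold_def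
      by (simp add: exp_add exp_diff exp_minus field_simps)
  finally have "ln ?L \<le> ?E" using pos by (metis exp_gt_zero ln_exp ln_le_cancel_iff)
  then have "- (1 / real t) * ?E \<le> - (1 / real t) * ln ?L"
    using t by (intro mult_left_mono_neg) auto
  moreover have "- (1 / real t) * ?E
      = rate - eta - (ln count_const + eta * (real max_return_len + 1)) / real t"
    using t by (simp add: field_simps)
  ultimately show ?thesis by simp
qed

lemma rate_minus_eta_le:
  assumes conv: "AE \<omega> in M. (\<lambda>t. - (1 / real t) * ln (lik N \<pi> P \<beta> t (\<lambda>i k. X i k \<omega>))) \<longlonglongrightarrow> \<zeta>"
  shows "rate - eta \<le> \<zeta>"
proof -
  define c where "c = ln count_const + eta * (real max_return_len + 1)"
  have "AE \<omega> in M. rate - eta \<le> \<zeta>"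
    using conv AE_eventually_not_large_lik
  proof eventually_elim
    case (elim \<omega>)
    have "eventually
        (\<lambda>t. rate - eta - c / real t \<le> - (1 / real t) * ln (lik N \<pi> P \<beta> t (\<lambda>i k. X i k \<omega>)))
        sequentially"
      using elim(2) eventually_ge_at_top[of 2] unfolding c_def
      by eventually_elim (rule neg_ln_lik_ge)
    moreover have "(\<lambda>t. rate - eta - c / real t) \<longlonglongrightarrow> rate - eta - 0"
      by (intro tendsto_intros)
    ultimately show ?case using tendsto_le[OF trivial_limit_sequentially elim(1)] by simp
  qed
  then show ?thesis by simp
qed

end

lemma (in gaussian_model) le_zeta_if_below_objective:
  assumes below_objective:
    "\<And>\<theta> \<xi>. \<theta> \<in> Delta N P \<Longrightarrow> Jfun N \<theta> \<xi> \<le> ereal (entr N \<theta>) \<Longrightarrow> z \<le> objective N P \<beta> \<theta> \<xi>"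
    and conv: "AE \<omega> in M. (\<lambda>t. - (1 / real t) * ln (lik N \<pi> P \<beta> t (\<lambda>i k. X i k \<omega>))) \<longlonglongrightarrow> \<zeta>"
  shows "z \<le> \<zeta>"
proof (rule field_le_epsilon)
  fix \<epsilon> :: real assume e: "0 < \<epsilon>"
  define Bm where "Bm = beta_sq_sum N \<beta>"
  have Bm: "Bm \<ge> 0" unfolding Bm_def by (rule beta_sq_sum_nonneg)
  \<comment> \<open>the losses \<open>2 p0 Bm\<close>, \<open>\<delta>\<close> and \<open>eta = p0 \<delta> / 2\<close> add up to at most \<open>\<epsilon>\<close>\<close>
  define p0 where "p0 = min 1 (\<epsilon> / (4 * (Bm + 1)))"
  define \<delta> where "\<delta> = \<epsilon> / 4"
  have p0: "0 < p0" "p0 \<le> 1" unfolding p0_def using e Bm by auto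
  have dl: "\<delta> > 0" unfolding \<delta>_def using e by simp
  interpret tilted_bound N P \<pi> \<beta> M X z p0 \<delta>
    by unfold_locales (use below_objective p0 dl in auto)
  have "p0 * Bm \<le> (\<epsilon> / (4 * (Bm + 1))) * Bm"
    unfolding p0_def using Bm by (intro mult_right_mono) auto
  also have "\<dots> \<le> \<epsilon> / 4" using e Bm by (simp add: field_simps)
  finally have "2 * p0 * Bm \<le> \<epsilon> / 2" by simp
  moreover have "p0 * \<delta> / 2 \<le> \<epsilon> / 8" unfolding \<delta>_def using p0 e by (simp add: field_simps)
  ultimately have "z - \<epsilon> \<le> rate - eta"
    using \<delta>_def e unfolding rate_def eta_def Bm_def[symmetric] by linarith
  then show "z \<le> \<zeta> + \<epsilon>" using rate_minus_eta_le[OF conv] by simp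
qed

lemma le_objective_if_less_zeta_low:
  assumes "ereal z < zeta_low N P \<beta>" "\<theta> \<in> Delta N P" "Jfun N \<theta> \<xi> \<le> ereal (entr N \<theta>)"
  shows "z \<le> objective N P \<beta> \<theta> \<xi>"
proof -
  have "zeta_low N P \<beta> \<le> ereal (objective N P \<beta> \<theta> \<xi>)"
    unfolding zeta_low_def using assms(2,3) by (intro INF_lower2[of "(\<theta>, \<xi>)"]) auto
  then have "ereal z < ereal (objective N P \<beta> \<theta> \<xi>)" using assms(1)
    by (rule order.strict_trans2[rotated])
  then show ?thesis by simp
qed

theorem theorem2:
  fixes N :: nat and P :: "nat \<Rightarrow> nat \<Rightarrow> real" and \<pi> \<beta> :: "nat \<Rightarrow> real"
    and M :: "'a measure" and X :: "nat \<Rightarrow> nat \<Rightarrow> 'a \<Rightarrow> real" and \<zeta> :: real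
  assumes "N \<ge> 1"
    and "row_stochastic N P" and "irreducible_chain N P" and "aperiodic_chain N P"
    and "stationary_pos N P \<pi>"
    and "prob_space M"
    and "prob_space.indep_vars M (\<lambda>_. borel) (\<lambda>(i, k). X i k) ({1..N} \<times> {1..})"
    and "\<And>i k. i \<in> {1..N} \<Longrightarrow> k \<ge> 1 \<Longrightarrow> distributed M lborel (X i k) std_normal_density"
    and "AE \<omega> in M. (\<lambda>t. - (1 / real t) * ln (lik N \<pi> P \<beta> t (\<lambda>i k. X i k \<omega>))) \<longlonglongrightarrow> \<zeta>"
  shows "zeta_low N P \<beta> \<le> ereal \<zeta>"
proof -
  interpret gaussian_model N P \<pi> \<beta> M X
    by (intro gaussian_model.intro finite_chain.intro gaussian_model_axioms.intro assms(6))
      (use assms in auto)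
  show ?thesis
  proof (rule ccontr)
    assume "\<not> ?thesis"
    then have "ereal \<zeta> < zeta_low N P \<beta>" by simp
    then obtain z where z: "ereal \<zeta> < ereal z" "ereal z < zeta_low N P \<beta>"
      using ereal_dense2 by blast
    have "z \<le> \<zeta>"
      using le_zeta_if_below_objective[OF le_objective_if_less_zeta_low[OF z(2)] assms(9)] .
    then show False using z(1) by simp
  qed
qed

end
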